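(* Let $F$ be a finite field of odd characteristic in which $-1$ is not a square, fix $C_0\ge1$, let $m\ge1$, and let $A,B\subseteq F^2$ with $m/2\le|A|,|B|\le 2m$ be such that either both $A$ and $B$ are $k$-regular (with constant $C_0$) for the same $k$, or both $A$ and $B$ are irregular. Then $$\min\Big\{|F|\big(\mathcal{R}(A)\mathcal{R}(B)\big)^{1/2},\ \mathcal{T}(A,B)\Big\}\lesssim m^{8/3}|F|^{2/3}+m^{7/2},$$ with implied constant depending only on $C_0$.
   Context: $x\cdot y=x_1y_1+x_2y_2$ on $F^2$. $(x_0,x_1,x_2)$ is a corner if $(x_1-x_0)\cdot(x_2-x_1)=0$; $(x_0,x_1,x_2,x_3)$ is a rectangle if each $(x_i,x_{i+1},x_{i+2})$, indices mod 4, is a corner; $\mathcal{R}(A)$ is the number of rectangles in $A^4$. $(x_1,x_2,x_3,x_4)$ is a trapezoid if $x_1-x_2=\lambda(x_3-x_4)$ for some $\lambda\in F$; $\mathcal{T}(A,B)$ is the number of trapezoids with $x_1,x_2\in A$, $x_3,x_4\in B$. A line is $\{p+tv:t\in F\}$, $v\ne0$. $A$ is $k$-regular (with constant $C_0$) if $k\le C_0|A|^{1/2}$ and there exist a set $L$ of lines with $k/C_0\le|L|\le C_0k$ and a partition $A=\bigsqcup_{\ell\in L}A_\ell$, $A_\ell\subseteq\ell$, with $|A|/(C_0k)\le|A_\ell|\le C_0|A|/k$ for each $\ell$. $A$ is irregular if $|\ell\cap A|\le|A|^{1/2}$ for every line $\ell$. *)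

theory Defs
  imports "HOL-Algebra.Ring" "HOL-Library.Disjoint_Sets" Complex_Main
begin

definition pdot :: "('a, 'b) ring_scheme \<Rightarrow> 'a \<times> 'a \<Rightarrow> 'a \<times> 'a \<Rightarrow> 'a" where
  "pdot R x y = (fst x \<otimes>\<^bsub>R\<^esub> fst y) \<oplus>\<^bsub>R\<^esub> (snd x \<otimes>\<^bsub>R\<^esub> snd y)"

definition psub :: "('a, 'b) ring_scheme \<Rightarrow> 'a \<times> 'a \<Rightarrow> 'a \<times> 'a \<Rightarrow> 'a \<times> 'a" where
  "psub R x y = (fst x \<ominus>\<^bsub>R\<^esub> fst y, snd x \<ominus>\<^bsub>R\<^esub> snd y)"

definition is_corner :: "('a, 'b) ring_scheme \<Rightarrow> 'a \<times> 'a \<Rightarrow> 'a \<times> 'a \<Rightarrow> 'a \<times> 'a \<Rightarrow> bool" where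
  "is_corner R x0 x1 x2 \<longleftrightarrow> pdot R (psub R x1 x0) (psub R x2 x1) = \<zero>\<^bsub>R\<^esub>"

definition is_rectangle :: "('a, 'b) ring_scheme \<Rightarrow> 'a \<times> 'a \<Rightarrow> 'a \<times> 'a \<Rightarrow> 'a \<times> 'a \<Rightarrow> 'a \<times> 'a \<Rightarrow> bool" where
  "is_rectangle R x0 x1 x2 x3 \<longleftrightarrow>
     is_corner R x0 x1 x2 \<and> is_corner R x1 x2 x3 \<and> is_corner R x2 x3 x0 \<and> is_corner R x3 x0 x1"

definition rect_count :: "('a, 'b) ring_scheme \<Rightarrow> ('a \<times> 'a) set \<Rightarrow> nat" where
  "rect_count R A = card {(x0, x1, x2, x3). x0 \<in> A \<and> x1 \<in> A \<and> x2 \<in> A \<and> x3 \<in> A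
                                            \<and> is_rectangle R x0 x1 x2 x3}"

definition is_trapezoid :: "('a, 'b) ring_scheme \<Rightarrow> 'a \<times> 'a \<Rightarrow> 'a \<times> 'a \<Rightarrow> 'a \<times> 'a \<Rightarrow> 'a \<times> 'a \<Rightarrow> bool" where
  "is_trapezoid R x1 x2 x3 x4 \<longleftrightarrow>
     (\<exists>c\<in>carrier R. psub R x1 x2 =
        (c \<otimes>\<^bsub>R\<^esub> fst (psub R x3 x4), c \<otimes>\<^bsub>R\<^esub> snd (psub R x3 x4)))"

definition trap_count :: "('a, 'b) ring_scheme \<Rightarrow> ('a \<times> 'a) set \<Rightarrow> ('a \<times> 'a) set \<Rightarrow> nat" where
  "trap_count R A B = card {(x1, x2, x3, x4). x1 \<in> A \<and> x2 \<in> A \<and> x3 \<in> B \<and> x4 \<in> B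
                                             \<and> is_trapezoid R x1 x2 x3 x4}"

definition is_line :: "('a, 'b) ring_scheme \<Rightarrow> ('a \<times> 'a) set \<Rightarrow> bool" where
  "is_line R l \<longleftrightarrow>
     (\<exists>p v. p \<in> carrier R \<times> carrier R \<and> v \<in> carrier R \<times> carrier R
            \<and> v \<noteq> (\<zero>\<^bsub>R\<^esub>, \<zero>\<^bsub>R\<^esub>)
            \<and> l = {(fst p \<oplus>\<^bsub>R\<^esub> t \<otimes>\<^bsub>R\<^esub> fst v, snd p \<oplus>\<^bsub>R\<^esub> t \<otimes>\<^bsub>R\<^esub> snd v) | t. t \<in> carrier R})"

definition k_regular :: "('a, 'b) ring_scheme \<Rightarrow> real \<Rightarrow> real \<Rightarrow> ('a \<times> 'a) set \<Rightarrow> bool" where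
  "k_regular R C0 k A \<longleftrightarrow>
     k \<le> C0 * sqrt (real (card A)) \<and>
     (\<exists>L Apart. finite L \<and> (\<forall>l\<in>L. is_line R l)
        \<and> k / C0 \<le> real (card L) \<and> real (card L) \<le> C0 * k
        \<and> A = (\<Union>l\<in>L. Apart l) \<and> disjoint_family_on Apart L
        \<and> (\<forall>l\<in>L. Apart l \<subseteq> l
                 \<and> real (card A) / (C0 * k) \<le> real (card (Apart l))
                 \<and> real (card (Apart l)) \<le> C0 * real (card A) / k))"

definition irregular :: "('a, 'b) ring_scheme \<Rightarrow> ('a \<times> 'a) set \<Rightarrow> bool" where
  "irregular R A \<longleftrightarrow> (\<forall>l. is_line R l \<longrightarrow> real (card (l \<inter> A)) \<le> sqrt (real (card A)))"

end

theory Submission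
  imports Defs
begin

text \<open>Since \<open>-1\<close> is not a square, \<open>x\<^sup>2 + y\<^sup>2 = 0\<close> only for \<open>x = y = 0\<close>. Hence three vertices of a
  rectangle determine the fourth, and the middle vertex of a right angle is the foot of the
  perpendicular from the first vertex to the line carrying the third. If \<open>A\<close> is covered by points
  on \<open>|L| \<le> C\<^sub>0 k\<close> lines, a line not in \<open>L\<close> meets \<open>A\<close> in at most \<open>|L|\<close> points; counting corners
  along such lines gives \<open>R(A) = O(K |A|\<^sup>2)\<close> with \<open>K = max k 1\<close>. In a trapezoid with \<open>x\<^sub>1 \<noteq> x\<^sub>2\<close>,
  \<open>x\<^sub>2\<close> lies on the parallel to \<open>x\<^sub>3x\<^sub>4\<close> through \<open>x\<^sub>1\<close> and \<open>x\<^sub>4\<close> on the parallel to \<open>x\<^sub>1x\<^sub>2\<close> through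
  \<open>x\<^sub>3\<close>; this gives \<open>T(A, B) = O(m^(7/2) + m\<^sup>4/K\<^sup>2)\<close> in the regular case and \<open>O(m^(7/2))\<close> when
  every line meets \<open>B\<close> in at most \<open>|B|^(1/2)\<close> points. Finally \<open>min(X, Y)\<^sup>3 \<le> X\<^sup>2 Y\<close> balances
  \<open>X = q m\<^sup>2 K\<close> against \<open>Y = m\<^sup>4/K\<^sup>2\<close> (\<open>q = |F|\<close>), and \<open>X\<^sup>2 Y = q\<^sup>2 m\<^sup>8\<close>.\<close>

section \<open>Ring identities\<close>

lemma (in ring) minus_eq_zero_iff:
  assumes "x \<in> carrier R" "y \<in> carrier R"
  shows "x \<ominus> y = \<zero> \<longleftrightarrow> x = y"
proof
  assume "x \<ominus> y = \<zero>"
  moreover have "x = (x \<ominus> y) \<oplus> y" using assms by algebra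
  ultimately show "x = y" using assms by simp
qed (use assms in \<open>simp add: a_minus_def r_neg\<close>)

lemma (in abelian_group) minus_add2:
  assumes "a \<in> carrier G" "b \<in> carrier G" "a' \<in> carrier G" "b' \<in> carrier G"
  shows "\<ominus> (a \<oplus> b) \<oplus> \<ominus> (a' \<oplus> b') = \<ominus> ((a \<oplus> a') \<oplus> (b \<oplus> b'))"
  using assms by (simp add: a_ac minus_add)

lemma (in abelian_group) minus_add4:
  assumes "a \<in> carrier G" "b \<in> carrier G" "c \<in> carrier G" "d \<in> carrier G"
    "a' \<in> carrier G" "b' \<in> carrier G" "c' \<in> carrier G" "d' \<in> carrier G"
  shows "\<ominus> (a \<oplus> b \<oplus> c \<oplus> d) \<oplus> \<ominus> (a' \<oplus> b' \<oplus> c' \<oplus> d')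
    = \<ominus> ((a \<oplus> a') \<oplus> (b \<oplus> b') \<oplus> (c \<oplus> c') \<oplus> (d \<oplus> d'))"
  using assms by (simp add: a_ac minus_add)

lemma (in cring) rectangle_coordinate_identity:
  assumes "a0 \<in> carrier R" "a1 \<in> carrier R" "a2 \<in> carrier R" "a3 \<in> carrier R"
  shows "(a3 \<ominus> (a0 \<ominus> a1 \<oplus> a2)) \<otimes> (a3 \<ominus> (a0 \<ominus> a1 \<oplus> a2))
    = \<ominus> ((a1 \<ominus> a0) \<otimes> (a2 \<ominus> a1) \<oplus> (a2 \<ominus> a1) \<otimes> (a3 \<ominus> a2)
         \<oplus> (a3 \<ominus> a2) \<otimes> (a0 \<ominus> a3) \<oplus> (a0 \<ominus> a3) \<otimes> (a1 \<ominus> a0))"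
proof -
  have sides: "\<And>u v w. u \<in> carrier R \<Longrightarrow> v \<in> carrier R \<Longrightarrow> w \<in> carrier R \<Longrightarrow>
      (u \<oplus> w) \<otimes> (u \<oplus> w) = \<ominus> (u \<otimes> v \<oplus> v \<otimes> w \<oplus> w \<otimes> (\<ominus> (u \<oplus> v \<oplus> w)) \<oplus> (\<ominus> (u \<oplus> v \<oplus> w)) \<otimes> u)"
    by algebra
  have diag: "a3 \<ominus> (a0 \<ominus> a1 \<oplus> a2) = (a1 \<ominus> a0) \<oplus> (a3 \<ominus> a2)" using assms by algebra
  have last_side: "a0 \<ominus> a3 = \<ominus> ((a1 \<ominus> a0) \<oplus> (a2 \<ominus> a1) \<oplus> (a3 \<ominus> a2))" using assms by algebra
  show ?thesis unfolding diag last_side by (rule sides) (use assms in auto)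
qed

lemma (in cring) perp_coordinate_identity:
  assumes "a0 \<in> carrier R" "a1 \<in> carrier R" "a2 \<in> carrier R"
  shows "(a2 \<ominus> a1) \<otimes> (a2 \<ominus> a1) = \<ominus> ((a1 \<ominus> a0) \<otimes> (a2 \<ominus> a1) \<oplus> (a2 \<ominus> a0) \<otimes> (a1 \<ominus> a2))"
  using assms by algebra

section \<open>Lines, corners and trapezoids in \<open>F\<^sup>2\<close>\<close>

definition affine_line :: "('a, 'b) ring_scheme \<Rightarrow> 'a \<times> 'a \<Rightarrow> 'a \<times> 'a \<Rightarrow> ('a \<times> 'a) set" where
  "affine_line R p v = {(fst p \<oplus>\<^bsub>R\<^esub> t \<otimes>\<^bsub>R\<^esub> fst v, snd p \<oplus>\<^bsub>R\<^esub> t \<otimes>\<^bsub>R\<^esub> snd v) | t. t \<in> carrier R}"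

definition perp_line :: "('a, 'b) ring_scheme \<Rightarrow> 'a \<times> 'a \<Rightarrow> 'a \<times> 'a \<Rightarrow> ('a \<times> 'a) set" where
  "perp_line R x u = {y \<in> carrier R \<times> carrier R. pdot R u (psub R y x) = \<zero>\<^bsub>R\<^esub>}"

context field
begin

lemma nonzero_r_inv_ex:
  assumes "a \<in> carrier R" "a \<noteq> \<zero>"
  shows "\<exists>c\<in>carrier R. a \<otimes> c = \<one>"
  using assms field_Units Units_r_inv_ex by blast

text \<open>Without a square root of \<open>-1\<close>, the form \<open>a\<^sup>2 + b\<^sup>2\<close> is anisotropic: if \<open>b \<noteq> 0\<close> then
  \<open>(a/b)\<^sup>2 = -1\<close>.\<close>
lemma sum_squares_eq_zero:
  assumes no_sqrt: "\<not> (\<exists>x\<in>carrier R. x \<otimes> x = \<ominus> \<one>)"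
    and ab: "a \<in> carrier R" "b \<in> carrier R" and sum: "a \<otimes> a \<oplus> b \<otimes> b = \<zero>"
  shows "a = \<zero> \<and> b = \<zero>"
proof (cases "b = \<zero>")
  case True
  then show ?thesis using sum ab integral by auto
next
  case False
  then obtain c where c: "c \<in> carrier R" "b \<otimes> c = \<one>" using nonzero_r_inv_ex ab by blast
  have "a \<otimes> c \<otimes> (a \<otimes> c) = (a \<otimes> a \<oplus> b \<otimes> b) \<otimes> (c \<otimes> c) \<ominus> (b \<otimes> c) \<otimes> (b \<otimes> c)"
    using ab c(1) by algebra
  also have "\<dots> = \<ominus> \<one>" using sum c ab by (simp add: a_minus_def)
  finally show ?thesis using no_sqrt ab c by blast
qed

lemma is_line_iff_affine_line:
  "is_line R l \<longleftrightarrow> (\<exists>p v. p \<in> carrier R \<times> carrier R \<and> v \<in> carrier R \<times> carrier R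
     \<and> v \<noteq> (\<zero>, \<zero>) \<and> l = affine_line R p v)"
  unfolding is_line_def affine_line_def by simp

lemma affine_lineI:
  "t \<in> carrier R \<Longrightarrow> z = (fst p \<oplus> t \<otimes> fst v, snd p \<oplus> t \<otimes> snd v) \<Longrightarrow> z \<in> affine_line R p v"
  unfolding affine_line_def by blast

lemma affine_lineI_minus:
  assumes "t \<in> carrier R" "y \<in> carrier R \<times> carrier R" "p \<in> carrier R \<times> carrier R" "v \<in> carrier R \<times> carrier R"
    and "fst y \<ominus> (fst p \<oplus> t \<otimes> fst v) = \<zero>" "snd y \<ominus> (snd p \<oplus> t \<otimes> snd v) = \<zero>"
  shows "y \<in> affine_line R p v"
  using assms by (intro affine_lineI[of t]) (auto simp: minus_eq_zero_iff mem_Times_iff prod_eq_iff)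

lemma affine_line_is_line:
  "p \<in> carrier R \<times> carrier R \<Longrightarrow> v \<in> carrier R \<times> carrier R \<Longrightarrow> v \<noteq> (\<zero>, \<zero>)
    \<Longrightarrow> is_line R (affine_line R p v)"
  unfolding is_line_iff_affine_line by blast

lemma affine_line_subset:
  "p \<in> carrier R \<times> carrier R \<Longrightarrow> v \<in> carrier R \<times> carrier R \<Longrightarrow> affine_line R p v \<subseteq> carrier R \<times> carrier R"
  unfolding affine_line_def by auto

lemma base_mem_affine_line:
  "p \<in> carrier R \<times> carrier R \<Longrightarrow> v \<in> carrier R \<times> carrier R \<Longrightarrow> p \<in> affine_line R p v"
  by (rule affine_lineI[of \<zero>]) (auto simp: mem_Times_iff)

lemma is_line_subset: "is_line R l \<Longrightarrow> l \<subseteq> carrier R \<times> carrier R"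
  by (metis is_line_iff_affine_line affine_line_subset)

lemma finite_is_line: "finite (carrier R) \<Longrightarrow> is_line R l \<Longrightarrow> finite l"
  using is_line_subset finite_subset by blast

lemma psub_closed:
  "x \<in> carrier R \<times> carrier R \<Longrightarrow> y \<in> carrier R \<times> carrier R \<Longrightarrow> psub R x y \<in> carrier R \<times> carrier R"
  unfolding psub_def by auto

lemma psub_eq_zero_iff:
  "x \<in> carrier R \<times> carrier R \<Longrightarrow> y \<in> carrier R \<times> carrier R \<Longrightarrow> psub R x y = (\<zero>, \<zero>) \<longleftrightarrow> x = y"
  unfolding psub_def by (cases x; cases y) (simp add: minus_eq_zero_iff)

lemma affine_line_psub_is_line:
  "p \<in> carrier R \<times> carrier R \<Longrightarrow> x \<in> carrier R \<times> carrier R \<Longrightarrow> y \<in> carrier R \<times> carrier R \<Longrightarrow> x \<noteq> y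
    \<Longrightarrow> is_line R (affine_line R p (psub R x y))"
  by (rule affine_line_is_line) (auto simp: psub_closed psub_eq_zero_iff)

lemma affine_line_reparam:
  assumes p: "p \<in> carrier R \<times> carrier R" and v: "v \<in> carrier R \<times> carrier R"
    and s: "s \<in> carrier R" and c: "c \<in> carrier R" "c \<noteq> \<zero>"
  shows "affine_line R (fst p \<oplus> s \<otimes> fst v, snd p \<oplus> s \<otimes> snd v) (c \<otimes> fst v, c \<otimes> snd v)
       = affine_line R p v"
proof -
  obtain p1 p2 v1 v2 where pv: "p = (p1, p2)" "v = (v1, v2)" by (cases p, cases v)
  have cr: "p1 \<in> carrier R" "p2 \<in> carrier R" "v1 \<in> carrier R" "v2 \<in> carrier R" using p v pv by auto
  obtain e where e: "e \<in> carrier R" "c \<otimes> e = \<one>" using nonzero_r_inv_ex c by blast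
  show ?thesis
  proof (intro equalityI subsetI)
    fix z assume "z \<in> affine_line R (fst p \<oplus> s \<otimes> fst v, snd p \<oplus> s \<otimes> snd v) (c \<otimes> fst v, c \<otimes> snd v)"
    then obtain t where t: "t \<in> carrier R" "z = (p1 \<oplus> s \<otimes> v1 \<oplus> t \<otimes> (c \<otimes> v1), p2 \<oplus> s \<otimes> v2 \<oplus> t \<otimes> (c \<otimes> v2))"
      unfolding affine_line_def pv by auto
    have eq: "\<And>q w. q \<in> carrier R \<Longrightarrow> w \<in> carrier R \<Longrightarrow> q \<oplus> s \<otimes> w \<oplus> t \<otimes> (c \<otimes> w) = q \<oplus> (s \<oplus> t \<otimes> c) \<otimes> w"
      using s c t(1) by algebra
    have "z = (p1 \<oplus> (s \<oplus> t \<otimes> c) \<otimes> v1, p2 \<oplus> (s \<oplus> t \<otimes> c) \<otimes> v2)"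
      using t(2) eq[OF cr(1) cr(3)] eq[OF cr(2) cr(4)] by simp
    then show "z \<in> affine_line R p v"
      by (intro affine_lineI[of "s \<oplus> t \<otimes> c"]) (use s c t in \<open>simp_all add: pv\<close>)
  next
    fix z assume "z \<in> affine_line R p v"
    then obtain t where t: "t \<in> carrier R" "z = (p1 \<oplus> t \<otimes> v1, p2 \<oplus> t \<otimes> v2)"
      unfolding affine_line_def pv by auto
    have eq: "\<And>q w. q \<in> carrier R \<Longrightarrow> w \<in> carrier R
        \<Longrightarrow> q \<oplus> s \<otimes> w \<oplus> (t \<ominus> s) \<otimes> e \<otimes> (c \<otimes> w) = q \<oplus> t \<otimes> w \<oplus> (t \<ominus> s) \<otimes> (c \<otimes> e \<ominus> \<one>) \<otimes> w"
      using s c e(1) t(1) by algebra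
    have "c \<otimes> e \<ominus> \<one> = \<zero>" using e c minus_eq_zero_iff by simp
    then have "z = (p1 \<oplus> s \<otimes> v1 \<oplus> (t \<ominus> s) \<otimes> e \<otimes> (c \<otimes> v1), p2 \<oplus> s \<otimes> v2 \<oplus> (t \<ominus> s) \<otimes> e \<otimes> (c \<otimes> v2))"
      using t eq[OF cr(1) cr(3)] eq[OF cr(2) cr(4)] s cr by simp
    then show "z \<in> affine_line R (fst p \<oplus> s \<otimes> fst v, snd p \<oplus> s \<otimes> snd v) (c \<otimes> fst v, c \<otimes> snd v)"
      by (intro affine_lineI[of "(t \<ominus> s) \<otimes> e"]) (use s e t in \<open>simp_all add: pv\<close>)
  qed
qed

lemma is_line_eq_affine_line:
  assumes l: "is_line R l" and xy: "x \<in> l" "y \<in> l" "x \<noteq> y"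
  shows "l = affine_line R x (psub R y x)"
proof -
  obtain p v where pv: "p \<in> carrier R \<times> carrier R" "v \<in> carrier R \<times> carrier R" "l = affine_line R p v"
    using l is_line_iff_affine_line by metis
  obtain s where s: "s \<in> carrier R" "x = (fst p \<oplus> s \<otimes> fst v, snd p \<oplus> s \<otimes> snd v)"
    using xy(1) unfolding pv(3) affine_line_def by auto
  obtain r where r: "r \<in> carrier R" "y = (fst p \<oplus> r \<otimes> fst v, snd p \<oplus> r \<otimes> snd v)"
    using xy(2) unfolding pv(3) affine_line_def by auto
  have nz: "r \<ominus> s \<noteq> \<zero>" using xy(3) s r minus_eq_zero_iff by metis
  have "\<And>q w. q \<in> carrier R \<Longrightarrow> w \<in> carrier R \<Longrightarrow> (q \<oplus> r \<otimes> w) \<ominus> (q \<oplus> s \<otimes> w) = (r \<ominus> s) \<otimes> w"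
    using s r by algebra
  then have "psub R y x = ((r \<ominus> s) \<otimes> fst v, (r \<ominus> s) \<otimes> snd v)"
    unfolding psub_def using s r pv by (auto simp: mem_Times_iff)
  then have "affine_line R x (psub R y x)
      = affine_line R (fst p \<oplus> s \<otimes> fst v, snd p \<oplus> s \<otimes> snd v) ((r \<ominus> s) \<otimes> fst v, (r \<ominus> s) \<otimes> snd v)"
    using s(2) by simp
  also have "\<dots> = l" unfolding pv(3) by (rule affine_line_reparam) (use pv s r nz in auto)
  finally show ?thesis by simp
qed

lemma card_inter_lines_le_1:
  assumes "finite (carrier R)" "is_line R l" "is_line R l'" "l \<noteq> l'"
  shows "card (l \<inter> l') \<le> 1"
proof -
  have "x = y" if "x \<in> l \<inter> l'" "y \<in> l \<inter> l'" for x y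
    using that is_line_eq_affine_line[OF assms(2), of x y] is_line_eq_affine_line[OF assms(3), of x y] assms(4)
    by blast
  then show ?thesis using assms finite_is_line by (simp add: card_le_Suc0_iff_eq)
qed

lemma perp_line_is_line:
  assumes x: "x \<in> carrier R \<times> carrier R" and u: "u \<in> carrier R \<times> carrier R" "u \<noteq> (\<zero>, \<zero>)"
  shows "is_line R (perp_line R x u)"
proof -
  obtain x1 x2 u1 u2 where xu: "x = (x1, x2)" "u = (u1, u2)" by (cases x, cases u)
  have cr: "x1 \<in> carrier R" "x2 \<in> carrier R" "u1 \<in> carrier R" "u2 \<in> carrier R" using x u xu by auto
  have "perp_line R x u = affine_line R x (\<ominus> u2, u1)"
  proof (intro equalityI subsetI)
    fix y assume "y \<in> affine_line R x (\<ominus> u2, u1)"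
    then obtain t where t: "t \<in> carrier R" "y = (x1 \<oplus> t \<otimes> (\<ominus> u2), x2 \<oplus> t \<otimes> u1)"
      unfolding affine_line_def xu by auto
    have "u1 \<otimes> ((x1 \<oplus> t \<otimes> (\<ominus> u2)) \<ominus> x1) \<oplus> u2 \<otimes> ((x2 \<oplus> t \<otimes> u1) \<ominus> x2) = \<zero>"
      using cr t(1) by algebra
    then show "y \<in> perp_line R x u"
      using t cr unfolding perp_line_def pdot_def psub_def xu by simp
  next
    fix y assume "y \<in> perp_line R x u"
    then obtain y1 y2 where y: "y = (y1, y2)" "y1 \<in> carrier R" "y2 \<in> carrier R"
      and orth: "u1 \<otimes> (y1 \<ominus> x1) \<oplus> u2 \<otimes> (y2 \<ominus> x2) = \<zero>"
      unfolding perp_line_def pdot_def psub_def xu by auto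
    show "y \<in> affine_line R x (\<ominus> u2, u1)"
    proof (cases "u1 = \<zero>")
      case False
      then obtain e where e: "e \<in> carrier R" "u1 \<otimes> e = \<one>" using nonzero_r_inv_ex cr by blast
      let ?t = "(y2 \<ominus> x2) \<otimes> e"
      have "y1 \<ominus> (x1 \<oplus> ?t \<otimes> (\<ominus> u2)) = e \<otimes> (u1 \<otimes> (y1 \<ominus> x1) \<oplus> u2 \<otimes> (y2 \<ominus> x2)) \<oplus> (\<one> \<ominus> u1 \<otimes> e) \<otimes> (y1 \<ominus> x1)"
        "y2 \<ominus> (x2 \<oplus> ?t \<otimes> u1) = (\<one> \<ominus> u1 \<otimes> e) \<otimes> (y2 \<ominus> x2)"
        using cr y e(1) by (algebra, algebra)
      moreover have "\<one> \<ominus> u1 \<otimes> e = \<zero>" using e minus_eq_zero_iff by simp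
      ultimately show ?thesis
        using orth e cr y by (intro affine_lineI_minus[of ?t]) (simp_all add: xu mem_Times_iff)
    next
      case True
      then have "u2 \<noteq> \<zero>" using u xu by auto
      then obtain e where e: "e \<in> carrier R" "u2 \<otimes> e = \<one>" using nonzero_r_inv_ex cr by blast
      let ?t = "\<ominus> ((y1 \<ominus> x1) \<otimes> e)"
      have "u2 \<otimes> (y2 \<ominus> x2) = \<zero>" using orth True cr y by simp
      then have "y2 \<ominus> x2 = \<zero>" using integral \<open>u2 \<noteq> \<zero>\<close> cr y by blast
      moreover have "y1 \<ominus> (x1 \<oplus> ?t \<otimes> (\<ominus> u2)) = (\<one> \<ominus> u2 \<otimes> e) \<otimes> (y1 \<ominus> x1)"
        using cr y e(1) by algebra
      moreover have "\<one> \<ominus> u2 \<otimes> e = \<zero>" using e minus_eq_zero_iff by simp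
      ultimately show ?thesis
        using True e cr y by (intro affine_lineI_minus[of ?t]) (simp_all add: xu mem_Times_iff)
    qed
  qed
  moreover have "(\<ominus> u2, u1) \<noteq> (\<zero>, \<zero>)"
  proof
    assume "(\<ominus> u2, u1) = (\<zero>, \<zero>)"
    then have "u2 = \<ominus> \<zero>" "u1 = \<zero>" using cr minus_minus[of u2] by auto
    then show False using u xu by simp
  qed
  ultimately show ?thesis using x cr affine_line_is_line by simp
qed

lemma is_corner_iff_perp_line:
  "x2 \<in> carrier R \<times> carrier R \<Longrightarrow> is_corner R x0 x1 x2 \<longleftrightarrow> x2 \<in> perp_line R x1 (psub R x1 x0)"
  unfolding is_corner_def perp_line_def by simp

lemma mem_perp_line_self:
  "x \<in> carrier R \<times> carrier R \<Longrightarrow> u \<in> carrier R \<times> carrier R \<Longrightarrow> x \<in> perp_line R x u"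
  unfolding perp_line_def pdot_def psub_def by (auto simp: mem_Times_iff a_minus_def r_neg)

text \<open>The two right angles force \<open>|x\<^sub>1 - y|\<^sup>2 = 0\<close>.\<close>
lemma perp_line_determines_foot:
  assumes no_sqrt: "\<not> (\<exists>x\<in>carrier R. x \<otimes> x = \<ominus> \<one>)"
    and x: "x0 \<in> carrier R \<times> carrier R" "x1 \<in> carrier R \<times> carrier R" "y \<in> carrier R \<times> carrier R"
    and eq: "perp_line R x1 (psub R x1 x0) = perp_line R y (psub R y x0)"
  shows "x1 = y"
proof -
  have "y \<in> perp_line R x1 (psub R x1 x0)"
    using eq mem_perp_line_self[OF x(3) psub_closed[OF x(3) x(1)]] by simp
  moreover have "x1 \<in> perp_line R y (psub R y x0)"
    using eq mem_perp_line_self[OF x(2) psub_closed[OF x(2) x(1)]] by simp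
  ultimately have h: "pdot R (psub R x1 x0) (psub R y x1) = \<zero>" "pdot R (psub R y x0) (psub R x1 y) = \<zero>"
    unfolding perp_line_def by auto
  obtain a0 b0 a1 b1 a2 b2 where xs: "x0 = (a0, b0)" "x1 = (a1, b1)" "y = (a2, b2)"
    by (cases x0, cases x1, cases y)
  have cr: "a0 \<in> carrier R" "b0 \<in> carrier R" "a1 \<in> carrier R" "b1 \<in> carrier R" "a2 \<in> carrier R" "b2 \<in> carrier R"
    using x xs by auto
  have "(a2 \<ominus> a1) \<otimes> (a2 \<ominus> a1) \<oplus> (b2 \<ominus> b1) \<otimes> (b2 \<ominus> b1)
      = \<ominus> ((a1 \<ominus> a0) \<otimes> (a2 \<ominus> a1) \<oplus> (a2 \<ominus> a0) \<otimes> (a1 \<ominus> a2))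
        \<oplus> \<ominus> ((b1 \<ominus> b0) \<otimes> (b2 \<ominus> b1) \<oplus> (b2 \<ominus> b0) \<otimes> (b1 \<ominus> b2))"
    using perp_coordinate_identity[of a0 a1 a2] perp_coordinate_identity[of b0 b1 b2] cr by simp
  also have "\<dots> = \<ominus> (pdot R (psub R x1 x0) (psub R y x1) \<oplus> pdot R (psub R y x0) (psub R x1 y))"
    unfolding pdot_def psub_def xs fst_conv snd_conv by (rule minus_add2) (use cr in simp_all)
  also have "\<dots> = \<zero>" using h by simp
  finally have sq: "(a2 \<ominus> a1) \<otimes> (a2 \<ominus> a1) \<oplus> (b2 \<ominus> b1) \<otimes> (b2 \<ominus> b1) = \<zero>" .
  have "a2 \<ominus> a1 = \<zero> \<and> b2 \<ominus> b1 = \<zero>" by (rule sum_squares_eq_zero[OF no_sqrt _ _ sq]) (use cr in simp_all)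
  then show ?thesis using xs cr minus_eq_zero_iff by simp
qed

text \<open>With \<open>u, v, w, z\<close> the four sides, \<open>|u + w|\<^sup>2 = -(u\<cdot>v + v\<cdot>w + w\<cdot>z + z\<cdot>u)\<close> because
  \<open>u + v + w + z = 0\<close>; hence opposite sides are equal.\<close>
lemma rectangle_fourth_vertex:
  assumes no_sqrt: "\<not> (\<exists>x\<in>carrier R. x \<otimes> x = \<ominus> \<one>)"
    and x: "x0 \<in> carrier R \<times> carrier R" "x1 \<in> carrier R \<times> carrier R"
      "x2 \<in> carrier R \<times> carrier R" "x3 \<in> carrier R \<times> carrier R"
    and rect: "is_rectangle R x0 x1 x2 x3"
  shows "x3 = (fst x0 \<ominus> fst x1 \<oplus> fst x2, snd x0 \<ominus> snd x1 \<oplus> snd x2)"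
proof -
  obtain a0 b0 a1 b1 a2 b2 a3 b3 where xs: "x0 = (a0, b0)" "x1 = (a1, b1)" "x2 = (a2, b2)" "x3 = (a3, b3)"
    by (cases x0, cases x1, cases x2, cases x3)
  have cr: "a0 \<in> carrier R" "b0 \<in> carrier R" "a1 \<in> carrier R" "b1 \<in> carrier R"
    "a2 \<in> carrier R" "b2 \<in> carrier R" "a3 \<in> carrier R" "b3 \<in> carrier R"
    using x xs by auto
  have "(a3 \<ominus> (a0 \<ominus> a1 \<oplus> a2)) \<otimes> (a3 \<ominus> (a0 \<ominus> a1 \<oplus> a2)) \<oplus> (b3 \<ominus> (b0 \<ominus> b1 \<oplus> b2)) \<otimes> (b3 \<ominus> (b0 \<ominus> b1 \<oplus> b2))
      = \<ominus> ((a1 \<ominus> a0) \<otimes> (a2 \<ominus> a1) \<oplus> (a2 \<ominus> a1) \<otimes> (a3 \<ominus> a2)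
           \<oplus> (a3 \<ominus> a2) \<otimes> (a0 \<ominus> a3) \<oplus> (a0 \<ominus> a3) \<otimes> (a1 \<ominus> a0))
        \<oplus> \<ominus> ((b1 \<ominus> b0) \<otimes> (b2 \<ominus> b1) \<oplus> (b2 \<ominus> b1) \<otimes> (b3 \<ominus> b2)
           \<oplus> (b3 \<ominus> b2) \<otimes> (b0 \<ominus> b3) \<oplus> (b0 \<ominus> b3) \<otimes> (b1 \<ominus> b0))"
    using rectangle_coordinate_identity[of a0 a1 a2 a3] rectangle_coordinate_identity[of b0 b1 b2 b3] cr
    by simp
  also have "\<dots> = \<ominus> (pdot R (psub R x1 x0) (psub R x2 x1) \<oplus> pdot R (psub R x2 x1) (psub R x3 x2)
           \<oplus> pdot R (psub R x3 x2) (psub R x0 x3) \<oplus> pdot R (psub R x0 x3) (psub R x1 x0))"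
    unfolding pdot_def psub_def xs fst_conv snd_conv by (rule minus_add4) (use cr in simp_all)
  also have "\<dots> = \<zero>" using rect unfolding is_rectangle_def is_corner_def by simp
  finally have sq: "(a3 \<ominus> (a0 \<ominus> a1 \<oplus> a2)) \<otimes> (a3 \<ominus> (a0 \<ominus> a1 \<oplus> a2))
      \<oplus> (b3 \<ominus> (b0 \<ominus> b1 \<oplus> b2)) \<otimes> (b3 \<ominus> (b0 \<ominus> b1 \<oplus> b2)) = \<zero>" .
  have "a3 \<ominus> (a0 \<ominus> a1 \<oplus> a2) = \<zero> \<and> b3 \<ominus> (b0 \<ominus> b1 \<oplus> b2) = \<zero>"
    by (rule sum_squares_eq_zero[OF no_sqrt _ _ sq]) (use cr in simp_all)
  then show ?thesis using xs cr minus_eq_zero_iff by simp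
qed

lemma trapezoid_parallel_lines:
  assumes x: "x1 \<in> carrier R \<times> carrier R" "x2 \<in> carrier R \<times> carrier R"
      "x3 \<in> carrier R \<times> carrier R" "x4 \<in> carrier R \<times> carrier R"
    and trap: "is_trapezoid R x1 x2 x3 x4" and ne: "x1 \<noteq> x2"
  shows "x3 \<noteq> x4" "x2 \<in> affine_line R x1 (psub R x3 x4)" "x4 \<in> affine_line R x3 (psub R x1 x2)"
proof -
  obtain a1 b1 a2 b2 a3 b3 a4 b4 where xs: "x1 = (a1, b1)" "x2 = (a2, b2)" "x3 = (a3, b3)" "x4 = (a4, b4)"
    by (cases x1, cases x2, cases x3, cases x4)
  have cr: "a1 \<in> carrier R" "b1 \<in> carrier R" "a2 \<in> carrier R" "b2 \<in> carrier R"
    "a3 \<in> carrier R" "b3 \<in> carrier R" "a4 \<in> carrier R" "b4 \<in> carrier R"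
    using x xs by auto
  obtain c where c: "c \<in> carrier R" "a1 \<ominus> a2 = c \<otimes> (a3 \<ominus> a4)" "b1 \<ominus> b2 = c \<otimes> (b3 \<ominus> b4)"
    using trap unfolding is_trapezoid_def psub_def xs by auto
  have "\<not> (a1 \<ominus> a2 = \<zero> \<and> b1 \<ominus> b2 = \<zero>)" using ne xs cr minus_eq_zero_iff by simp
  then have nz: "c \<noteq> \<zero>" "\<not> (a3 \<ominus> a4 = \<zero> \<and> b3 \<ominus> b4 = \<zero>)" using c cr by auto
  then show "x3 \<noteq> x4" using xs cr by (auto simp: a_minus_def r_neg)
  have "a2 \<ominus> (a1 \<oplus> (\<ominus> c) \<otimes> (a3 \<ominus> a4)) = c \<otimes> (a3 \<ominus> a4) \<ominus> (a1 \<ominus> a2)"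
    "b2 \<ominus> (b1 \<oplus> (\<ominus> c) \<otimes> (b3 \<ominus> b4)) = c \<otimes> (b3 \<ominus> b4) \<ominus> (b1 \<ominus> b2)"
    using cr c(1) by (algebra, algebra)
  then show "x2 \<in> affine_line R x1 (psub R x3 x4)"
    using c cr x by (intro affine_lineI_minus[of "\<ominus> c"]) (simp_all add: xs psub_def minus_eq_zero_iff)
  obtain e where e: "e \<in> carrier R" "c \<otimes> e = \<one>" using nonzero_r_inv_ex c(1) nz(1) by blast
  have "a4 \<ominus> (a3 \<oplus> (\<ominus> e) \<otimes> (c \<otimes> (a3 \<ominus> a4))) = (c \<otimes> e \<ominus> \<one>) \<otimes> (a3 \<ominus> a4)"
    "b4 \<ominus> (b3 \<oplus> (\<ominus> e) \<otimes> (c \<otimes> (b3 \<ominus> b4))) = (c \<otimes> e \<ominus> \<one>) \<otimes> (b3 \<ominus> b4)"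
    using cr c(1) e(1) by (algebra, algebra)
  moreover have "c \<otimes> e \<ominus> \<one> = \<zero>" using e c minus_eq_zero_iff by simp
  ultimately show "x4 \<in> affine_line R x3 (psub R x1 x2)"
    using c cr x e by (intro affine_lineI_minus[of "\<ominus> e"]) (simp_all add: xs psub_def)
qed

end

section \<open>Counting rectangles and trapezoids\<close>

lemma card_le_UN_bound:
  assumes "finite X" "\<And>x. x \<in> X \<Longrightarrow> finite (F x)" "\<And>x. x \<in> X \<Longrightarrow> real (card (F x)) \<le> K"
    and "S \<subseteq> \<Union> (F ` X)"
  shows "real (card S) \<le> real (card X) * K"
proof -
  have "card S \<le> card (\<Union> (F ` X))" using assms by (intro card_mono) auto
  also have "\<dots> \<le> (\<Sum>x\<in>X. card (F x))" using card_UN_le[OF assms(1)] .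
  finally have "real (card S) \<le> (\<Sum>x\<in>X. real (card (F x)))" by (metis of_nat_le_iff of_nat_sum)
  also have "\<dots> \<le> (\<Sum>x\<in>X. K)" using assms(3) by (intro sum_mono) auto
  finally show ?thesis by simp
qed

text \<open>The covering part of \<open>k\<close>-regularity: \<open>A\<close> is the union of pieces \<open>P l \<subseteq> l\<close> over lines
  \<open>l \<in> L\<close>.\<close>
definition line_cover :: "('a, 'b) ring_scheme \<Rightarrow> ('a \<times> 'a) set set \<Rightarrow> (('a \<times> 'a) set \<Rightarrow> ('a \<times> 'a) set)
    \<Rightarrow> ('a \<times> 'a) set \<Rightarrow> bool" where
  "line_cover R L P A \<longleftrightarrow> finite L \<and> (\<forall>l\<in>L. is_line R l \<and> P l \<subseteq> l) \<and> A = (\<Union>l\<in>L. P l)"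

definition corners :: "('a, 'b) ring_scheme \<Rightarrow> ('a \<times> 'a) set \<Rightarrow> (('a \<times> 'a) \<times> ('a \<times> 'a) \<times> ('a \<times> 'a)) set" where
  "corners R A = {(x0, x1, x2). x0 \<in> A \<and> x1 \<in> A \<and> x2 \<in> A \<and> is_corner R x0 x1 x2}"

definition trapezoids :: "('a, 'b) ring_scheme \<Rightarrow> ('a \<times> 'a) set \<Rightarrow> ('a \<times> 'a) set
    \<Rightarrow> (('a \<times> 'a) \<times> ('a \<times> 'a) \<times> ('a \<times> 'a) \<times> ('a \<times> 'a)) set" where
  "trapezoids R A B = {(x1, x2, x3, x4). x1 \<in> A \<and> x2 \<in> A \<and> x3 \<in> B \<and> x4 \<in> B \<and> is_trapezoid R x1 x2 x3 x4}"

context field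
begin

lemma line_cover_subset: "line_cover R L P A \<Longrightarrow> A \<subseteq> carrier R \<times> carrier R"
  unfolding line_cover_def using is_line_subset by blast

text \<open>A line other than the \<open>l \<in> L\<close> meets each of them at most once.\<close>
lemma card_line_inter_cover:
  assumes fin: "finite (carrier R)" and cover: "line_cover R L P A" and m: "is_line R m"
  shows "card (m \<inter> A) \<le> card L + (if m \<in> L then card (P m) else 0)"
proof -
  have L: "finite L" "\<And>l. l \<in> L \<Longrightarrow> is_line R l \<and> P l \<subseteq> l" and A: "A = (\<Union>l\<in>L. P l)"
    using cover unfolding line_cover_def by auto
  have "card (m \<inter> A) \<le> (\<Sum>l\<in>L. card (m \<inter> P l))"
    unfolding A Int_UN_distrib by (rule card_UN_le[OF L(1)])
  also have "\<dots> \<le> (\<Sum>l\<in>L. 1 + (if l = m then card (P l) else 0))"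
  proof (rule sum_mono)
    fix l assume l: "l \<in> L"
    then have fin_l: "finite l" using L(2) finite_is_line fin by blast
    show "card (m \<inter> P l) \<le> 1 + (if l = m then card (P l) else 0)"
    proof (cases "l = m")
      case True
      have "card (m \<inter> P l) \<le> card (P l)" using fin_l L(2)[OF l] by (intro card_mono) (auto intro: finite_subset)
      then show ?thesis using True by simp
    next
      case False
      have "card (m \<inter> P l) \<le> card (m \<inter> l)" using fin_l L(2)[OF l] by (intro card_mono) auto
      also have "\<dots> \<le> 1" using card_inter_lines_le_1[OF fin m] L(2)[OF l] False by auto
      finally show ?thesis using False by simp
    qed
  qed
  also have "\<dots> = card L + (if m \<in> L then card (P m) else 0)"
    unfolding sum.distrib using L(1) by (simp add: sum.delta')
  finally show ?thesis .
qed

lemma card_line_inter_cover_le: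
  assumes "finite (carrier R)" "line_cover R L P A" "is_line R m"
    and "\<And>l. l \<in> L \<Longrightarrow> real (card (P l)) \<le> M" "0 \<le> M"
  shows "real (card (m \<inter> A)) \<le> real (card L) + M"
  using card_line_inter_cover[OF assms(1-3)] assms(4,5) by (cases "m \<in> L") force+

lemma card_rectangles_le_corners:
  assumes no_sqrt: "\<not> (\<exists>x\<in>carrier R. x \<otimes> x = \<ominus> \<one>)"
    and A: "finite A" "A \<subseteq> carrier R \<times> carrier R"
  shows "rect_count R A \<le> card (corners R A)"
proof -
  let ?complete = "\<lambda>(x0, x1, x2). (x0, x1, x2, (fst x0 \<ominus> fst x1 \<oplus> fst x2, snd x0 \<ominus> snd x1 \<oplus> snd x2))"
  have "{(x0, x1, x2, x3). x0 \<in> A \<and> x1 \<in> A \<and> x2 \<in> A \<and> x3 \<in> A \<and> is_rectangle R x0 x1 x2 x3}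
      \<subseteq> ?complete ` corners R A"
  proof clarify
    fix x0 x1 x2 x3 assume x: "x0 \<in> A" "x1 \<in> A" "x2 \<in> A" "x3 \<in> A" and rect: "is_rectangle R x0 x1 x2 x3"
    then have "x3 = (fst x0 \<ominus> fst x1 \<oplus> fst x2, snd x0 \<ominus> snd x1 \<oplus> snd x2)"
      using rectangle_fourth_vertex[OF no_sqrt] A(2) by blast
    moreover have "(x0, x1, x2) \<in> corners R A" using x rect unfolding corners_def is_rectangle_def by simp
    ultimately show "(x0, x1, x2, x3) \<in> ?complete ` corners R A" by force
  qed
  moreover have "finite (corners R A)"
    by (rule finite_subset[of _ "A \<times> A \<times> A"]) (use A(1) in \<open>auto simp: corners_def\<close>)
  ultimately show ?thesis unfolding rect_count_def by (meson card_image_le card_mono finite_imageI order_trans)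
qed

lemma finite_corners: "finite A \<Longrightarrow> finite (corners R A)"
  by (rule finite_subset[of _ "A \<times> A \<times> A"]) (auto simp: corners_def)

lemma mem_corners_perp_line:
  assumes "(x0, x1, x2) \<in> corners R A" "A \<subseteq> carrier R \<times> carrier R"
  shows "x2 \<in> perp_line R x1 (psub R x1 x0)"
  using assms is_corner_iff_perp_line[of x2 x0 x1] unfolding corners_def by auto

lemma card_corners_degenerate:
  "finite A \<Longrightarrow> card {(x0, x1, x2) \<in> corners R A. x0 = x1} \<le> card A ^ 2"
proof -
  assume "finite A"
  have "{(x0, x1, x2) \<in> corners R A. x0 = x1} \<subseteq> (\<lambda>(x1, x2). (x1, x1, x2)) ` (A \<times> A)"
    unfolding corners_def by auto
  then have "card {(x0, x1, x2) \<in> corners R A. x0 = x1} \<le> card (A \<times> A)"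
    using \<open>finite A\<close> by (meson card_image_le card_mono finite_SigmaI finite_imageI order_trans)
  then show ?thesis by (simp add: card_cartesian_product power2_eq_square)
qed

lemma card_corners_perp_not_in_cover:
  assumes fin: "finite (carrier R)" and cover: "line_cover R L P A"
  shows "real (card {(x0, x1, x2) \<in> corners R A. x0 \<noteq> x1 \<and> perp_line R x1 (psub R x1 x0) \<notin> L})
    \<le> real (card A) ^ 2 * real (card L)"
proof -
  have AF: "A \<subseteq> carrier R \<times> carrier R" using cover by (rule line_cover_subset)
  then have finA: "finite A" using fin finite_subset by blast
  define X where "X = {(x0, x1) \<in> A \<times> A. x0 \<noteq> x1 \<and> perp_line R x1 (psub R x1 x0) \<notin> L}"
  define F where "F = (\<lambda>(x0, x1). {x0} \<times> {x1} \<times> (perp_line R x1 (psub R x1 x0) \<inter> A))"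
  have sub: "{(x0, x1, x2) \<in> corners R A. x0 \<noteq> x1 \<and> perp_line R x1 (psub R x1 x0) \<notin> L} \<subseteq> \<Union> (F ` X)"
  proof
    fix t assume "t \<in> {(x0, x1, x2) \<in> corners R A. x0 \<noteq> x1 \<and> perp_line R x1 (psub R x1 x0) \<notin> L}"
    then obtain x0 x1 x2 where x: "t = (x0, x1, x2)" "(x0, x1, x2) \<in> corners R A" "x0 \<noteq> x1"
      "perp_line R x1 (psub R x1 x0) \<notin> L" by (cases t) simp
    have "x2 \<in> perp_line R x1 (psub R x1 x0)" using x(2) AF by (rule mem_corners_perp_line)
    then show "t \<in> \<Union> (F ` X)"
      using x unfolding corners_def X_def F_def by (intro UN_I[of "(x0, x1)"]) auto
  qed
  have bound: "real (card (F x)) \<le> real (card L)" if "x \<in> X" for x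
  proof -
    obtain x0 x1 where x0: "x = (x0, x1)" by (rule prod.exhaust)
    then have x: "x = (x0, x1)" "x0 \<in> A" "x1 \<in> A" "x0 \<noteq> x1" "perp_line R x1 (psub R x1 x0) \<notin> L"
      using that unfolding X_def by simp_all
    have "x0 \<in> carrier R \<times> carrier R" "x1 \<in> carrier R \<times> carrier R" using x AF by auto
    then have "is_line R (perp_line R x1 (psub R x1 x0))"
      using x(4) by (intro perp_line_is_line psub_closed) (auto simp: psub_eq_zero_iff)
    then have "card (perp_line R x1 (psub R x1 x0) \<inter> A) \<le> card L"
      using card_line_inter_cover[OF fin cover] x(5) by fastforce
    then show ?thesis using x by (simp add: F_def card_cartesian_product)
  qed
  have "finite X" unfolding X_def by (rule finite_subset[of _ "A \<times> A"]) (use finA in auto)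
  have "real (card {(x0, x1, x2) \<in> corners R A. x0 \<noteq> x1 \<and> perp_line R x1 (psub R x1 x0) \<notin> L})
      \<le> real (card X) * real (card L)"
    by (rule card_le_UN_bound[OF \<open>finite X\<close> _ bound sub]) (use finA in \<open>auto simp: F_def\<close>)
  also have "card X \<le> card (A \<times> A)" unfolding X_def using finA by (intro card_mono) auto
  then have "real (card X) \<le> real (card A) ^ 2"
    by (simp add: card_cartesian_product power2_eq_square flip: of_nat_mult)
  then have "real (card X) * real (card L) \<le> real (card A) ^ 2 * real (card L)"
    by (rule mult_right_mono) simp
  finally show ?thesis .
qed

text \<open>A line \<open>l \<in> L\<close> and the vertex \<open>x\<^sub>0\<close> determine the middle vertex \<open>x\<^sub>1\<close>: it is the foot of
  the perpendicular from \<open>x\<^sub>0\<close> to \<open>l\<close>.\<close>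
lemma card_corners_perp_in_cover:
  assumes fin: "finite (carrier R)" and no_sqrt: "\<not> (\<exists>x\<in>carrier R. x \<otimes> x = \<ominus> \<one>)"
    and cover: "line_cover R L P A"
    and M: "\<And>l. l \<in> L \<Longrightarrow> real (card (P l)) \<le> M" "0 \<le> M"
  shows "real (card {(x0, x1, x2) \<in> corners R A. x0 \<noteq> x1 \<and> perp_line R x1 (psub R x1 x0) \<in> L})
    \<le> real (card L) * real (card A) * (real (card L) + M)"
proof -
  have AF: "A \<subseteq> carrier R \<times> carrier R" using cover by (rule line_cover_subset)
  then have finA: "finite A" using fin finite_subset by blast
  have L: "finite L" "\<And>l. l \<in> L \<Longrightarrow> is_line R l" using cover unfolding line_cover_def by auto
  define feet where "feet l x0 = {x1 \<in> A. x1 \<noteq> x0 \<and> perp_line R x1 (psub R x1 x0) = l}" for l x0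
  define F where "F = (\<lambda>(l, x0). {x0} \<times> feet l x0 \<times> (l \<inter> A))"
  have sub: "{(x0, x1, x2) \<in> corners R A. x0 \<noteq> x1 \<and> perp_line R x1 (psub R x1 x0) \<in> L} \<subseteq> \<Union> (F ` (L \<times> A))"
  proof
    fix t assume "t \<in> {(x0, x1, x2) \<in> corners R A. x0 \<noteq> x1 \<and> perp_line R x1 (psub R x1 x0) \<in> L}"
    then obtain x0 x1 x2 where x: "t = (x0, x1, x2)" "(x0, x1, x2) \<in> corners R A" "x0 \<noteq> x1"
      "perp_line R x1 (psub R x1 x0) \<in> L" by (cases t) simp
    have "x2 \<in> perp_line R x1 (psub R x1 x0)" using x(2) AF by (rule mem_corners_perp_line)
    then show "t \<in> \<Union> (F ` (L \<times> A))"
      using x unfolding corners_def feet_def F_def by (intro UN_I[of "(perp_line R x1 (psub R x1 x0), x0)"]) auto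
  qed
  have bound: "real (card (F x)) \<le> real (card L) + M" if "x \<in> L \<times> A" for x
  proof -
    obtain l x0 where x0: "x = (l, x0)" by (rule prod.exhaust)
    then have x: "x = (l, x0)" "l \<in> L" "x0 \<in> A" using that by simp_all
    have "a = b" if "a \<in> feet l x0" "b \<in> feet l x0" for a b
      using perp_line_determines_foot[OF no_sqrt, of x0 a b] that x(3) AF unfolding feet_def by auto
    then have "card (feet l x0) \<le> 1" using finA by (simp add: card_le_Suc0_iff_eq feet_def)
    then have "card (feet l x0) * card (l \<inter> A) \<le> 1 * card (l \<inter> A)" by (rule mult_right_mono) simp
    moreover have "card (F x) = card (feet l x0) * card (l \<inter> A)" using x by (simp add: F_def card_cartesian_product)
    ultimately have "card (F x) \<le> card (l \<inter> A)" by linarith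
    then have "real (card (F x)) \<le> real (card (l \<inter> A))" by simp
    also have "\<dots> \<le> real (card L) + M"
      using card_line_inter_cover_le[OF fin cover L(2)[OF x(2)] M] .
    finally show ?thesis .
  qed
  have "real (card {(x0, x1, x2) \<in> corners R A. x0 \<noteq> x1 \<and> perp_line R x1 (psub R x1 x0) \<in> L})
      \<le> real (card (L \<times> A)) * (real (card L) + M)"
    by (rule card_le_UN_bound[OF _ _ bound sub]) (use finA L(1) in \<open>auto simp: F_def feet_def\<close>)
  then show ?thesis by (simp add: card_cartesian_product)
qed

lemma card_corners_le:
  assumes fin: "finite (carrier R)" and no_sqrt: "\<not> (\<exists>x\<in>carrier R. x \<otimes> x = \<ominus> \<one>)"
    and cover: "line_cover R L P A"
    and M: "\<And>l. l \<in> L \<Longrightarrow> real (card (P l)) \<le> M" "0 \<le> M"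
  shows "real (card (corners R A)) \<le> real (card A) ^ 2 + real (card A) ^ 2 * real (card L)
    + real (card L) * real (card A) * (real (card L) + M)"
proof -
  have finA: "finite A" using line_cover_subset[OF cover] fin finite_subset by blast
  let ?C1 = "{(x0, x1, x2) \<in> corners R A. x0 = x1}"
  let ?C2 = "{(x0, x1, x2) \<in> corners R A. x0 \<noteq> x1 \<and> perp_line R x1 (psub R x1 x0) \<notin> L}"
  let ?C3 = "{(x0, x1, x2) \<in> corners R A. x0 \<noteq> x1 \<and> perp_line R x1 (psub R x1 x0) \<in> L}"
  have "corners R A \<subseteq> ?C1 \<union> ?C2 \<union> ?C3"
  proof
    fix t assume "t \<in> corners R A"
    moreover obtain x0 x1 x2 where "t = (x0, x1, x2)" by (rule prod_cases3)
    ultimately show "t \<in> ?C1 \<union> ?C2 \<union> ?C3"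
      by (cases "x0 = x1"; cases "perp_line R x1 (psub R x1 x0) \<in> L") simp_all
  qed
  moreover have "finite (?C1 \<union> ?C2 \<union> ?C3)"
    by (rule finite_subset[OF _ finite_corners[OF finA]]) auto
  ultimately have "card (corners R A) \<le> card (?C1 \<union> ?C2 \<union> ?C3)" by (rule card_mono[rotated])
  also have "\<dots> \<le> card (?C1 \<union> ?C2) + card ?C3" by (rule card_Un_le)
  finally have "card (corners R A) \<le> card (?C1 \<union> ?C2) + card ?C3" .
  moreover have "card (?C1 \<union> ?C2) \<le> card ?C1 + card ?C2" by (rule card_Un_le)
  ultimately have "real (card (corners R A)) \<le> real (card ?C1) + real (card ?C2) + real (card ?C3)"
    by linarith
  moreover have "real (card ?C1) \<le> real (card A) ^ 2"
    using card_corners_degenerate[OF finA] by (simp add: of_nat_le_iff flip: of_nat_power)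
  ultimately show ?thesis
    using card_corners_perp_not_in_cover[OF fin cover] card_corners_perp_in_cover[OF fin no_sqrt cover M]
    by linarith
qed

lemma finite_trapezoids: "finite A \<Longrightarrow> finite B \<Longrightarrow> finite (trapezoids R A B)"
  by (rule finite_subset[of _ "A \<times> A \<times> B \<times> B"]) (auto simp: trapezoids_def)

lemma card_trapezoids_degenerate:
  assumes "finite A" "finite B"
  shows "card {(x1, x2, x3, x4) \<in> trapezoids R A B. x1 = x2} \<le> card A * card B ^ 2"
proof -
  have "{(x1, x2, x3, x4) \<in> trapezoids R A B. x1 = x2} \<subseteq> (\<lambda>(x1, x3, x4). (x1, x1, x3, x4)) ` (A \<times> B \<times> B)"
  proof
    fix t assume t: "t \<in> {(x1, x2, x3, x4) \<in> trapezoids R A B. x1 = x2}"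
    obtain x1 x2 x3 x4 where "t = (x1, x2, x3, x4)" by (rule prod_cases4)
    with t show "t \<in> (\<lambda>(x1, x3, x4). (x1, x1, x3, x4)) ` (A \<times> B \<times> B)"
      unfolding trapezoids_def by (intro image_eqI[of _ _ "(x1, x3, x4)"]) auto
  qed
  then have "card {(x1, x2, x3, x4) \<in> trapezoids R A B. x1 = x2} \<le> card (A \<times> B \<times> B)"
    using assms by (meson card_image_le card_mono finite_SigmaI finite_imageI order_trans)
  then show ?thesis by (simp add: card_cartesian_product power2_eq_square)
qed

lemma card_trapezoids_by_fourth_vertex:
  assumes AB: "finite A" "finite B" "A \<subseteq> carrier R \<times> carrier R" "B \<subseteq> carrier R \<times> carrier R"
    and bound: "\<And>x1 x2 x3. x1 \<in> A \<Longrightarrow> x2 \<in> A \<Longrightarrow> x3 \<in> B \<Longrightarrow> x1 \<noteq> x2 \<Longrightarrow> Q x1 x2 x3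
      \<Longrightarrow> real (card (affine_line R x3 (psub R x1 x2) \<inter> B)) \<le> N"
    and N: "0 \<le> N"
  shows "real (card {(x1, x2, x3, x4) \<in> trapezoids R A B. x1 \<noteq> x2 \<and> Q x1 x2 x3})
    \<le> real (card A) ^ 2 * real (card B) * N"
proof -
  define X where "X = {(x1, x2, x3) \<in> A \<times> A \<times> B. x1 \<noteq> x2 \<and> Q x1 x2 x3}"
  define F where "F = (\<lambda>(x1, x2, x3). {x1} \<times> {x2} \<times> {x3} \<times> (affine_line R x3 (psub R x1 x2) \<inter> B))"
  have sub: "{(x1, x2, x3, x4) \<in> trapezoids R A B. x1 \<noteq> x2 \<and> Q x1 x2 x3} \<subseteq> \<Union> (F ` X)"
  proof
    fix t assume t: "t \<in> {(x1, x2, x3, x4) \<in> trapezoids R A B. x1 \<noteq> x2 \<and> Q x1 x2 x3}"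
    obtain x1 x2 x3 x4 where t_eq: "t = (x1, x2, x3, x4)" by (rule prod_cases4)
    then have x: "x1 \<in> A" "x2 \<in> A" "x3 \<in> B" "x4 \<in> B" "is_trapezoid R x1 x2 x3 x4" "x1 \<noteq> x2" "Q x1 x2 x3"
      using t unfolding trapezoids_def by simp_all
    have c: "x1 \<in> carrier R \<times> carrier R" "x2 \<in> carrier R \<times> carrier R"
      "x3 \<in> carrier R \<times> carrier R" "x4 \<in> carrier R \<times> carrier R" using x AB by auto
    have "x4 \<in> affine_line R x3 (psub R x1 x2)" using trapezoid_parallel_lines(3)[OF c x(5,6)] .
    then show "t \<in> \<Union> (F ` X)" using x t_eq unfolding X_def F_def by (intro UN_I[of "(x1, x2, x3)"]) auto
  qed
  have F_bound: "real (card (F x)) \<le> N" if "x \<in> X" for x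
  proof -
    obtain x1 x2 x3 where x_eq: "x = (x1, x2, x3)" by (rule prod_cases3)
    then have "x1 \<in> A" "x2 \<in> A" "x3 \<in> B" "x1 \<noteq> x2" "Q x1 x2 x3" using that unfolding X_def by simp_all
    then have "real (card (affine_line R x3 (psub R x1 x2) \<inter> B)) \<le> N" by (rule bound)
    moreover have "card (F x) = card (affine_line R x3 (psub R x1 x2) \<inter> B)"
      unfolding x_eq F_def by (simp add: card_cartesian_product)
    ultimately show ?thesis by simp
  qed
  have "finite X" unfolding X_def by (rule finite_subset[of _ "A \<times> A \<times> B"]) (use AB in auto)
  have "real (card {(x1, x2, x3, x4) \<in> trapezoids R A B. x1 \<noteq> x2 \<and> Q x1 x2 x3}) \<le> real (card X) * N"
    by (rule card_le_UN_bound[OF \<open>finite X\<close> _ F_bound sub]) (use AB in \<open>auto simp: F_def\<close>)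
  also have "card X \<le> card (A \<times> A \<times> B)" unfolding X_def using AB by (intro card_mono) auto
  then have "real (card X) * N \<le> real (card A) ^ 2 * real (card B) * N"
    using N by (intro mult_right_mono) (simp_all add: card_cartesian_product power2_eq_square flip: of_nat_mult)
  finally show ?thesis .
qed

lemma card_trapezoids_by_second_vertex:
  assumes AB: "finite A" "finite B" "A \<subseteq> carrier R \<times> carrier R" "B \<subseteq> carrier R \<times> carrier R"
    and bound: "\<And>x1 x3 x4. x1 \<in> A \<Longrightarrow> x3 \<in> B \<Longrightarrow> x4 \<in> B \<Longrightarrow> x3 \<noteq> x4 \<Longrightarrow> Q x1 x3 x4
      \<Longrightarrow> real (card (affine_line R x1 (psub R x3 x4) \<inter> A)) \<le> N"
    and N: "0 \<le> N"
  shows "real (card {(x1, x2, x3, x4) \<in> trapezoids R A B. x1 \<noteq> x2 \<and> Q x1 x3 x4})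
    \<le> real (card A) * real (card B) ^ 2 * N"
proof -
  define X where "X = {(x1, x3, x4) \<in> A \<times> B \<times> B. x3 \<noteq> x4 \<and> Q x1 x3 x4}"
  define F where "F = (\<lambda>(x1, x3, x4). (\<lambda>x2. (x1, x2, x3, x4)) ` (affine_line R x1 (psub R x3 x4) \<inter> A))"
  have sub: "{(x1, x2, x3, x4) \<in> trapezoids R A B. x1 \<noteq> x2 \<and> Q x1 x3 x4} \<subseteq> \<Union> (F ` X)"
  proof
    fix t assume t: "t \<in> {(x1, x2, x3, x4) \<in> trapezoids R A B. x1 \<noteq> x2 \<and> Q x1 x3 x4}"
    obtain x1 x2 x3 x4 where t_eq: "t = (x1, x2, x3, x4)" by (rule prod_cases4)
    then have x: "x1 \<in> A" "x2 \<in> A" "x3 \<in> B" "x4 \<in> B" "is_trapezoid R x1 x2 x3 x4" "x1 \<noteq> x2" "Q x1 x3 x4"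
      using t unfolding trapezoids_def by simp_all
    have c: "x1 \<in> carrier R \<times> carrier R" "x2 \<in> carrier R \<times> carrier R"
      "x3 \<in> carrier R \<times> carrier R" "x4 \<in> carrier R \<times> carrier R" using x AB by auto
    have "x3 \<noteq> x4" "x2 \<in> affine_line R x1 (psub R x3 x4)" using trapezoid_parallel_lines(1,2)[OF c x(5,6)] .
    then show "t \<in> \<Union> (F ` X)" using x t_eq unfolding X_def F_def by (intro UN_I[of "(x1, x3, x4)"]) auto
  qed
  have F_bound: "real (card (F x)) \<le> N" if "x \<in> X" for x
  proof -
    obtain x1 x3 x4 where x_eq: "x = (x1, x3, x4)" by (rule prod_cases3)
    then have "x1 \<in> A" "x3 \<in> B" "x4 \<in> B" "x3 \<noteq> x4" "Q x1 x3 x4" using that unfolding X_def by simp_all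
    then have "real (card (affine_line R x1 (psub R x3 x4) \<inter> A)) \<le> N" by (rule bound)
    moreover have "card (F x) \<le> card (affine_line R x1 (psub R x3 x4) \<inter> A)"
      unfolding F_def x_eq prod.case using AB by (intro card_image_le) simp
    ultimately show ?thesis by linarith
  qed
  have "finite X" unfolding X_def by (rule finite_subset[of _ "A \<times> B \<times> B"]) (use AB in auto)
  have "real (card {(x1, x2, x3, x4) \<in> trapezoids R A B. x1 \<noteq> x2 \<and> Q x1 x3 x4}) \<le> real (card X) * N"
    by (rule card_le_UN_bound[OF \<open>finite X\<close> _ F_bound sub]) (use AB in \<open>auto simp: F_def\<close>)
  also have "card X \<le> card (A \<times> B \<times> B)" unfolding X_def using AB by (intro card_mono) auto
  then have "real (card X) * N \<le> real (card A) * real (card B) ^ 2 * N"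
    using N by (intro mult_right_mono) (simp_all add: card_cartesian_product power2_eq_square flip: of_nat_mult)
  finally show ?thesis .
qed

lemma card_trapezoids_in_covers:
  assumes fin: "finite (carrier R)"
    and A: "line_cover R LA PA A" "\<And>l. l \<in> LA \<Longrightarrow> real (card (PA l)) \<le> MA" "0 \<le> MA"
    and B: "line_cover R LB PB B" "\<And>l. l \<in> LB \<Longrightarrow> real (card (PB l)) \<le> MB" "0 \<le> MB"
  shows "real (card {(x1, x2, x3, x4) \<in> trapezoids R A B. x1 \<noteq> x2
      \<and> affine_line R x1 (psub R x3 x4) \<in> LA \<and> affine_line R x3 (psub R x1 x2) \<in> LB})
    \<le> real (card LA) * real (card LB) * ((real (card LA) + MA) ^ 2 * (real (card LB) + MB) ^ 2)"
proof -
  have AF: "A \<subseteq> carrier R \<times> carrier R" using A(1) by (rule line_cover_subset)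
  have BF: "B \<subseteq> carrier R \<times> carrier R" using B(1) by (rule line_cover_subset)
  have LA: "finite LA" "\<And>l. l \<in> LA \<Longrightarrow> is_line R l" using A(1) unfolding line_cover_def by auto
  have LB: "finite LB" "\<And>l. l \<in> LB \<Longrightarrow> is_line R l" using B(1) unfolding line_cover_def by auto
  define F where "F = (\<lambda>(l, m). (l \<inter> A) \<times> (l \<inter> A) \<times> (m \<inter> B) \<times> (m \<inter> B))"
  have sub: "{(x1, x2, x3, x4) \<in> trapezoids R A B. x1 \<noteq> x2
      \<and> affine_line R x1 (psub R x3 x4) \<in> LA \<and> affine_line R x3 (psub R x1 x2) \<in> LB} \<subseteq> \<Union> (F ` (LA \<times> LB))"
  proof
    fix t assume t: "t \<in> {(x1, x2, x3, x4) \<in> trapezoids R A B. x1 \<noteq> x2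
      \<and> affine_line R x1 (psub R x3 x4) \<in> LA \<and> affine_line R x3 (psub R x1 x2) \<in> LB}"
    obtain x1 x2 x3 x4 where t_eq: "t = (x1, x2, x3, x4)" by (rule prod_cases4)
    then have x: "x1 \<in> A" "x2 \<in> A" "x3 \<in> B" "x4 \<in> B" "is_trapezoid R x1 x2 x3 x4" "x1 \<noteq> x2"
      "affine_line R x1 (psub R x3 x4) \<in> LA" "affine_line R x3 (psub R x1 x2) \<in> LB"
      using t unfolding trapezoids_def by simp_all
    have c: "x1 \<in> carrier R \<times> carrier R" "x2 \<in> carrier R \<times> carrier R"
      "x3 \<in> carrier R \<times> carrier R" "x4 \<in> carrier R \<times> carrier R" using x AF BF by auto
    have "x2 \<in> affine_line R x1 (psub R x3 x4)" "x4 \<in> affine_line R x3 (psub R x1 x2)"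
      using trapezoid_parallel_lines(2,3)[OF c x(5,6)] .
    moreover have "x1 \<in> affine_line R x1 (psub R x3 x4)" "x3 \<in> affine_line R x3 (psub R x1 x2)"
      using c by (simp_all add: base_mem_affine_line psub_closed)
    ultimately show "t \<in> \<Union> (F ` (LA \<times> LB))" using x t_eq unfolding F_def
      by (intro UN_I[of "(affine_line R x1 (psub R x3 x4), affine_line R x3 (psub R x1 x2))"]) auto
  qed
  have F_bound: "real (card (F x)) \<le> (real (card LA) + MA) ^ 2 * (real (card LB) + MB) ^ 2"
    if "x \<in> LA \<times> LB" for x
  proof -
    obtain l m where x_eq: "x = (l, m)" by (rule prod.exhaust)
    then have "l \<in> LA" "m \<in> LB" using that by simp_all
    then have "real (card (l \<inter> A)) \<le> real (card LA) + MA" "real (card (m \<inter> B)) \<le> real (card LB) + MB"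
      using card_line_inter_cover_le[OF fin A(1) LA(2) A(2,3)] card_line_inter_cover_le[OF fin B(1) LB(2) B(2,3)]
      by blast+
    then have "real (card (l \<inter> A)) ^ 2 * real (card (m \<inter> B)) ^ 2
        \<le> (real (card LA) + MA) ^ 2 * (real (card LB) + MB) ^ 2"
      by (intro mult_mono power_mono) auto
    then show ?thesis unfolding x_eq F_def by (simp add: card_cartesian_product power2_eq_square)
  qed
  have "real (card {(x1, x2, x3, x4) \<in> trapezoids R A B. x1 \<noteq> x2
      \<and> affine_line R x1 (psub R x3 x4) \<in> LA \<and> affine_line R x3 (psub R x1 x2) \<in> LB})
    \<le> real (card (LA \<times> LB)) * ((real (card LA) + MA) ^ 2 * (real (card LB) + MB) ^ 2)"
  proof (rule card_le_UN_bound[OF _ _ F_bound sub])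
    have "finite A" "finite B" using AF BF fin finite_subset by blast+
    then show "finite (F x)" for x by (simp add: F_def split: prod.split)
  qed (use LA(1) LB(1) in simp)
  then show ?thesis by (simp add: card_cartesian_product)
qed

lemma trap_count_le_covers:
  assumes fin: "finite (carrier R)"
    and A: "line_cover R LA PA A" "\<And>l. l \<in> LA \<Longrightarrow> real (card (PA l)) \<le> MA" "0 \<le> MA"
    and B: "line_cover R LB PB B" "\<And>l. l \<in> LB \<Longrightarrow> real (card (PB l)) \<le> MB" "0 \<le> MB"
  shows "real (trap_count R A B) \<le> real (card A) * real (card B) ^ 2
    + real (card A) * real (card B) ^ 2 * real (card LA) + real (card A) ^ 2 * real (card B) * real (card LB)
    + real (card LA) * real (card LB) * ((real (card LA) + MA) ^ 2 * (real (card LB) + MB) ^ 2)"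
proof -
  have AF: "A \<subseteq> carrier R \<times> carrier R" using A(1) by (rule line_cover_subset)
  have BF: "B \<subseteq> carrier R \<times> carrier R" using B(1) by (rule line_cover_subset)
  have fins: "finite A" "finite B" using AF BF fin finite_subset by blast+
  let ?l1 = "\<lambda>x1 x3 x4. affine_line R x1 (psub R x3 x4)" and ?l2 = "\<lambda>x1 x2 x3. affine_line R x3 (psub R x1 x2)"
  let ?T0 = "{(x1, x2, x3, x4) \<in> trapezoids R A B. x1 = x2}"
  let ?T1 = "{(x1, x2, x3, x4) \<in> trapezoids R A B. x1 \<noteq> x2 \<and> ?l1 x1 x3 x4 \<notin> LA}"
  let ?T2 = "{(x1, x2, x3, x4) \<in> trapezoids R A B. x1 \<noteq> x2 \<and> ?l2 x1 x2 x3 \<notin> LB}"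
  let ?T3 = "{(x1, x2, x3, x4) \<in> trapezoids R A B. x1 \<noteq> x2 \<and> ?l1 x1 x3 x4 \<in> LA \<and> ?l2 x1 x2 x3 \<in> LB}"
  have "trapezoids R A B \<subseteq> ?T0 \<union> ?T1 \<union> ?T2 \<union> ?T3"
  proof
    fix t assume "t \<in> trapezoids R A B"
    moreover obtain x1 x2 x3 x4 where "t = (x1, x2, x3, x4)" by (rule prod_cases4)
    ultimately show "t \<in> ?T0 \<union> ?T1 \<union> ?T2 \<union> ?T3"
      by (cases "x1 = x2"; cases "?l1 x1 x3 x4 \<in> LA"; cases "?l2 x1 x2 x3 \<in> LB") simp_all
  qed
  moreover have "finite (?T0 \<union> ?T1 \<union> ?T2 \<union> ?T3)"
    by (rule finite_subset[OF _ finite_trapezoids[OF fins]]) auto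
  ultimately have "card (trapezoids R A B) \<le> card (?T0 \<union> ?T1 \<union> ?T2 \<union> ?T3)" by (rule card_mono[rotated])
  also have "\<dots> \<le> card (?T0 \<union> ?T1 \<union> ?T2) + card ?T3" by (rule card_Un_le)
  also have "\<dots> \<le> card (?T0 \<union> ?T1) + card ?T2 + card ?T3" using card_Un_le by simp
  also have "\<dots> \<le> card ?T0 + card ?T1 + card ?T2 + card ?T3" using card_Un_le by simp
  finally have "card (trapezoids R A B) \<le> card ?T0 + card ?T1 + card ?T2 + card ?T3" .
  then have "real (trap_count R A B) \<le> real (card ?T0) + real (card ?T1) + real (card ?T2) + real (card ?T3)"
    unfolding trap_count_def trapezoids_def by linarith
  moreover have "real (card ?T0) \<le> real (card A) * real (card B) ^ 2"
    using card_trapezoids_degenerate[OF fins] by (simp add: of_nat_le_iff flip: of_nat_power of_nat_mult)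
  moreover have "real (card ?T1) \<le> real (card A) * real (card B) ^ 2 * real (card LA)"
  proof (rule card_trapezoids_by_second_vertex[OF fins AF BF])
    fix x1 x3 x4 assume x: "x1 \<in> A" "x3 \<in> B" "x4 \<in> B" "x3 \<noteq> x4" "?l1 x1 x3 x4 \<notin> LA"
    then have "is_line R (?l1 x1 x3 x4)" using AF BF by (intro affine_line_psub_is_line) auto
    then show "real (card (?l1 x1 x3 x4 \<inter> A)) \<le> real (card LA)"
      using card_line_inter_cover[OF fin A(1)] x(5) by fastforce
  qed simp
  moreover have "real (card ?T2) \<le> real (card A) ^ 2 * real (card B) * real (card LB)"
  proof (rule card_trapezoids_by_fourth_vertex[OF fins AF BF])
    fix x1 x2 x3 assume x: "x1 \<in> A" "x2 \<in> A" "x3 \<in> B" "x1 \<noteq> x2" "?l2 x1 x2 x3 \<notin> LB"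
    then have "is_line R (?l2 x1 x2 x3)" using AF BF by (intro affine_line_psub_is_line) auto
    then show "real (card (?l2 x1 x2 x3 \<inter> B)) \<le> real (card LB)"
      using card_line_inter_cover[OF fin B(1)] x(5) by fastforce
  qed simp
  ultimately show ?thesis using card_trapezoids_in_covers[OF fin A B] by linarith
qed

lemma trap_count_le_irregular:
  assumes fin: "finite (carrier R)"
    and AB: "A \<subseteq> carrier R \<times> carrier R" "B \<subseteq> carrier R \<times> carrier R" and irr: "irregular R B"
  shows "real (trap_count R A B) \<le> real (card A) * real (card B) ^ 2
    + real (card A) ^ 2 * real (card B) * sqrt (real (card B))"
proof -
  have fins: "finite A" "finite B" using AB fin finite_subset by blast+
  let ?T0 = "{(x1, x2, x3, x4) \<in> trapezoids R A B. x1 = x2}"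
  let ?T1 = "{(x1, x2, x3, x4) \<in> trapezoids R A B. x1 \<noteq> x2 \<and> True}"
  have "trapezoids R A B \<subseteq> ?T0 \<union> ?T1"
  proof
    fix t assume "t \<in> trapezoids R A B"
    moreover obtain x1 x2 x3 x4 where "t = (x1, x2, x3, x4)" by (rule prod_cases4)
    ultimately show "t \<in> ?T0 \<union> ?T1" by (cases "x1 = x2") simp_all
  qed
  moreover have "finite (?T0 \<union> ?T1)" by (rule finite_subset[OF _ finite_trapezoids[OF fins]]) auto
  ultimately have "card (trapezoids R A B) \<le> card (?T0 \<union> ?T1)" by (rule card_mono[rotated])
  also have "\<dots> \<le> card ?T0 + card ?T1" by (rule card_Un_le)
  finally have "card (trapezoids R A B) \<le> card ?T0 + card ?T1" .
  then have "real (trap_count R A B) \<le> real (card ?T0) + real (card ?T1)"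
    unfolding trap_count_def trapezoids_def by linarith
  moreover have "real (card ?T0) \<le> real (card A) * real (card B) ^ 2"
    using card_trapezoids_degenerate[OF fins] by (simp add: of_nat_le_iff flip: of_nat_power of_nat_mult)
  moreover have "real (card ?T1) \<le> real (card A) ^ 2 * real (card B) * sqrt (real (card B))"
  proof (rule card_trapezoids_by_fourth_vertex[OF fins AB])
    fix x1 x2 x3 assume "x1 \<in> A" "x2 \<in> A" "x3 \<in> B" "x1 \<noteq> x2"
    then have "is_line R (affine_line R x3 (psub R x1 x2))" using AB by (intro affine_line_psub_is_line) auto
    then show "real (card (affine_line R x3 (psub R x1 x2) \<inter> B)) \<le> sqrt (real (card B))"
      using irr unfolding irregular_def by blast
  qed simp
  ultimately show ?thesis by linarith
qed

end

section \<open>The numerical bounds\<close>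

lemma square_le_of_le_mult_sqrt:
  fixes k c a :: real
  assumes "0 < k" "k \<le> c * sqrt a" "0 \<le> a" "0 \<le> c"
  shows "k^2 \<le> c^2 * a"
proof -
  have "k^2 \<le> (c * sqrt a)^2" using assms by (intro power_mono) auto
  also have "\<dots> = c^2 * a" using assms by (simp add: power_mult_distrib)
  finally show ?thesis .
qed

lemma powr_seven_halves: "0 < (m::real) \<Longrightarrow> m powr (7/2) = m^3 * sqrt m"
proof -
  assume "0 < m"
  have "m powr (7/2) = m powr 3 * m powr (1/2)" by (simp flip: powr_add)
  then show ?thesis using \<open>0 < m\<close> by (simp add: powr_half_sqrt)
qed

lemma cube_le_powr_seven_halves: "1 \<le> (m::real) \<Longrightarrow> m^3 \<le> m powr (7/2)"
  by (simp add: powr_seven_halves mult_le_cancel_left1)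

lemma power4_add_le: "((u::real) + v)^4 \<le> 8 * (u^4 + v^4)"
proof -
  have "(u + v)^2 \<le> 2 * (u^2 + v^2)" using sum_squares_ge_zero[of "u - v" 0] by (simp add: power2_eq_square algebra_simps)
  then have "((u + v)^2)^2 \<le> (2 * (u^2 + v^2))^2" by (rule power_mono) simp
  then have "(u + v)^4 \<le> (2 * (u^2 + v^2))^2" by (simp flip: power_mult)
  also have "\<dots> \<le> 8 * (u^4 + v^4)" using sum_squares_ge_zero[of "u^2 - v^2" 0]
    by (simp add: power2_eq_square power4_eq_xxxx algebra_simps)
  finally show ?thesis .
qed

lemma inverse_square_le_max:
  fixes C0 k :: real
  assumes "1 \<le> C0" "0 < k" "1 \<le> C0 * k"
  shows "1 / k^2 \<le> C0^2 / (max k 1)^2"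
proof (cases "1 \<le> k")
  case True
  then show ?thesis using assms by (simp add: divide_right_mono max_def)
next
  case False
  have "1 \<le> (C0 * k)^2" using assms by (simp add: one_le_power)
  then show ?thesis using False assms by (simp add: max_def field_simps power_mult_distrib)
qed

lemma min_cube_le:
  fixes x y :: real
  assumes "0 \<le> x" "0 \<le> y"
  shows "min x y ^ 3 \<le> x ^ 2 * y"
proof -
  have "min x y ^ 3 = min x y * min x y * min x y" by (simp add: power3_eq_cube)
  also have "\<dots> \<le> x * x * y" using assms by (intro mult_mono) auto
  finally show ?thesis by (simp add: power2_eq_square)
qed

lemma min_le_balanced:
  fixes C m q K X T :: real
  assumes C: "0 < C" and m: "1 \<le> m" and q: "0 < q" and K: "0 < K"
    and X: "X \<le> C * m^2 * K" and T: "T \<le> C * (m powr (7/2) + m^4 / K^2)"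
  shows "min (q * X) T \<le> C * (m powr (8/3) * q powr (2/3) + m powr (7/2))"
proof -
  define s where "s = q powr (1/3)"
  define r where "r = m powr (2/3)"
  have s0: "s > 0" unfolding s_def using q by simp
  have r0: "r > 0" unfolding r_def using m by simp
  have "s^3 = s powr 3" using s0 by simp
  also have "\<dots> = q" unfolding s_def powr_powr using q by simp
  finally have s3: "s^3 = q" .
  have "r^3 = r powr 3" using r0 by simp
  also have "\<dots> = m powr 2" unfolding r_def powr_powr by simp
  also have "\<dots> = m^2" using m by simp
  finally have r3: "r^3 = m^2" .
  have "s^2 = s powr 2" using s0 by simp
  also have "\<dots> = q powr (2/3)" unfolding s_def powr_powr by simp
  finally have q23: "q powr (2/3) = s^2" by simp
  have "m powr (8/3) = m powr (2 + 2/3)" by simp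
  also have "\<dots> = m powr 2 * m powr (2/3)" by (rule powr_add)
  also have "\<dots> = m^2 * r" unfolding r_def using m by simp
  finally have m83: "m powr (8/3) = m^2 * r" .
  let ?A = "C * q * m^2 * K" and ?B = "C * m^4 / K^2"
  have "min ?A ?B ^ 3 \<le> ?A ^ 2 * ?B" using C q K by (intro min_cube_le) auto
  also have "?A ^ 2 * ?B = C^3 * q^2 * (m^2)^4" using K by (simp add: field_simps power2_eq_square power3_eq_cube power4_eq_xxxx)
  also have "\<dots> = (C * s^2 * (m^2 * r))^3"
    unfolding s3[symmetric] by (simp add: power_mult_distrib r3[symmetric] flip: power_mult)
  finally have cube: "min ?A ?B ^ 3 \<le> (C * s^2 * (m^2 * r)) ^ 3" .
  have "min ?A ?B \<le> C * s^2 * (m^2 * r)"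
    by (rule power_le_imp_le_base[where n = 2]) (use cube C s0 r0 in simp_all)
  also have "\<dots> = C * (m powr (8/3) * q powr (2/3))" using m83 q23 by simp
  finally have balanced: "min ?A ?B \<le> C * (m powr (8/3) * q powr (2/3))" .
  have "q * X \<le> ?A" using X q by (simp add: mult_left_mono algebra_simps)
  moreover have "T \<le> ?B + C * m powr (7/2)" using T by (simp add: algebra_simps)
  moreover have "0 \<le> C * m powr (7/2)" using C by simp
  ultimately have "min (q * X) T \<le> min ?A ?B + C * m powr (7/2)" by linarith
  with balanced show ?thesis by (simp add: algebra_simps)
qed

lemma corner_bound_arith:
  fixes C0 k K a n Rc :: real
  assumes C0: "C0 \<ge> 1" and k: "k > 0" "k \<le> C0 * sqrt a" and a: "a \<ge> 0" and n: "0 \<le> n" "n \<le> C0 * k"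
    and K: "k \<le> K" "1 \<le> K" and Rc: "Rc \<le> a^2 + a^2 * n + n * a * (n + C0 * a / k)"
  shows "Rc \<le> 4 * C0^4 * K * a^2"
proof -
  have k2: "k^2 \<le> C0^2 * a" using square_le_of_le_mult_sqrt k a C0 by auto
  have t2: "a^2 * n \<le> a^2 * (C0 * K)"
  proof -
    have "n \<le> C0 * K" using n K C0 by (smt (verit) mult_left_mono)
    then show ?thesis using a by (intro mult_left_mono) auto
  qed
  have t3: "n * a * (n + C0 * a / k) \<le> (C0 * k) * a * (C0 * k + C0 * a / k)"
  proof -
    have "0 \<le> C0 * a / k" using C0 a k by simp
    then have "n + C0 * a / k \<le> C0 * k + C0 * a / k" "0 \<le> n + C0 * a / k" using n by auto
    moreover have "n * a \<le> C0 * k * a" using n a by (intro mult_right_mono) auto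
    ultimately show ?thesis using n a by (intro mult_mono) auto
  qed
  have e3: "(C0 * k) * a * (C0 * k + C0 * a / k) = C0^2 * k^2 * a + C0^2 * a^2"
    using k by (simp add: field_simps power2_eq_square)
  have "C0^2 * k^2 * a \<le> C0^2 * (C0^2 * a) * a" using k2 a by (intro mult_right_mono mult_left_mono) auto
  then have t3': "n * a * (n + C0 * a / k) \<le> C0^4 * a^2 + C0^2 * a^2"
    using t3 e3 by (simp add: power2_eq_square power4_eq_xxxx algebra_simps)
  have "Rc \<le> a^2 * (1 + C0 * K + C0^4 + C0^2)" using Rc t2 t3' by (simp add: algebra_simps)
  also have "\<dots> \<le> a^2 * (4 * C0^4 * K)"
  proof -
    have c1: "1 \<le> C0^4 * K" using C0 K by (metis mult_mono' one_le_power mult_1_left zero_le_one order_trans)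
    have c2: "C0 * K \<le> C0^4 * K" using C0 K by (intro mult_right_mono) (auto intro: self_le_power[of C0 4, simplified])
    have c3: "C0^4 \<le> C0^4 * K" using C0 K by (simp add: mult_le_cancel_left1)
    have c4: "C0^2 \<le> C0^4 * K"
    proof -
      have "C0^2 \<le> C0^4" using C0 by (intro power_increasing) auto
      then show ?thesis using c3 by linarith
    qed
    show ?thesis using c1 c2 c3 c4 by (intro mult_left_mono) auto
  qed
  finally show ?thesis by (simp add: algebra_simps)
qed

lemma trapezoid_main_term_le:
  fixes C0 k m a b nA nB :: real
  assumes C0: "1 \<le> C0" and k: "0 < k" "1 \<le> C0 * k" "k^2 \<le> 2 * C0^2 * m"
    and ab: "0 \<le> a" "a \<le> 2 * m" "0 \<le> b" "b \<le> 2 * m"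
    and n: "0 \<le> nA" "nA \<le> C0 * k" "0 \<le> nB" "nB \<le> C0 * k"
  shows "nA * nB * ((nA + C0 * a / k)^2 * (nB + C0 * b / k)^2)
    \<le> 64 * C0^12 * m^3 + 128 * C0^8 * (m^4 / (max k 1)^2)"
proof -
  define u where "u = C0 * k"
  define v where "v = 2 * C0 * m / k"
  have uv: "0 \<le> u" "0 \<le> v" using C0 k ab unfolding u_def v_def by auto
  have "C0 * a / k \<le> v" "C0 * b / k \<le> v"
    using C0 k ab unfolding v_def by (simp_all add: divide_right_mono mult_left_mono)
  then have "nA * nB * ((nA + C0 * a / k)^2 * (nB + C0 * b / k)^2) \<le> u * u * ((u + v)^2 * (u + v)^2)"
    using n C0 k ab unfolding u_def by (intro mult_mono power_mono) auto
  also have "\<dots> = u^2 * (u + v)^4" by (simp add: power2_eq_square power4_eq_xxxx)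
  also have "\<dots> \<le> u^2 * (8 * (u^4 + v^4))" by (intro mult_left_mono power4_add_le) simp
  also have "\<dots> = 8 * (u^2)^3 + 8 * (u^2 * v^4)" by (simp add: algebra_simps flip: power_mult power_add)
  also have "(u^2)^3 \<le> (2 * C0^4 * m)^3"
  proof (rule power_mono)
    show "u^2 \<le> 2 * C0^4 * m"
      using k(3) C0 mult_left_mono[OF k(3), of "C0^2"] unfolding u_def by (simp add: power_mult_distrib algebra_simps)
  qed simp
  also have "u^2 * v^4 = 16 * C0^6 * m^4 * (1 / k^2)"
    using k unfolding u_def v_def by (simp add: field_simps power2_eq_square power4_eq_xxxx eval_nat_numeral)
  also have "\<dots> \<le> 16 * C0^6 * m^4 * (C0^2 / (max k 1)^2)"
    using inverse_square_le_max[OF C0 k(1,2)] by (intro mult_left_mono) auto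
  finally show ?thesis by (simp add: power_mult_distrib algebra_simps flip: power_add)
qed

lemma trapezoid_bound_arith:
  fixes C0 k m a b nA nB T :: real
  assumes C0: "1 \<le> C0" and m: "1 \<le> m" and ab: "0 \<le> a" "a \<le> 2 * m" "0 \<le> b" "b \<le> 2 * m"
    and k: "0 < k" "k \<le> C0 * sqrt a" "1 \<le> C0 * k"
    and n: "0 \<le> nA" "nA \<le> C0 * k" "0 \<le> nB" "nB \<le> C0 * k"
    and T: "T \<le> a * b^2 + a * b^2 * nA + a^2 * b * nB + nA * nB * ((nA + C0 * a / k)^2 * (nB + C0 * b / k)^2)"
  shows "T \<le> 128 * C0^12 * (m powr (7/2) + m^4 / (max k 1)^2)"
proof -
  define P where "P = m powr (7/2)"
  have P: "P = m^3 * sqrt m" "m^3 \<le> P" using m powr_seven_halves cube_le_powr_seven_halves unfolding P_def by auto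
  have C0p: "C0^j \<le> C0^12" if "j \<le> 12" for j using C0 that by (intro power_increasing) auto
  have "k^2 \<le> C0^2 * a" using square_le_of_le_mult_sqrt k ab C0 by auto
  also have "\<dots> \<le> 2 * C0^2 * m" using mult_left_mono[OF ab(2), of "C0^2"] by (simp add: algebra_simps)
  finally have k2: "k^2 \<le> 2 * C0^2 * m" .
  have "sqrt a \<le> 2 * sqrt m" using ab m real_sqrt_le_mono[of a "4 * m"] by (simp add: real_sqrt_mult)
  then have "C0 * sqrt a \<le> C0 * (2 * sqrt m)" using C0 by (intro mult_left_mono) auto
  then have "k \<le> 2 * C0 * sqrt m" using k(2) by linarith
  then have nk: "C0 * k \<le> 2 * C0^2 * sqrt m"
    using mult_left_mono[of k "2 * C0 * sqrt m" C0] C0 by (simp add: power2_eq_square algebra_simps)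
  have cube: "a * b^2 \<le> 8 * m^3" "a^2 * b \<le> 8 * m^3"
    using mult_mono[OF ab(2) power_mono[OF ab(4) ab(3), of 2]] mult_mono[OF power_mono[OF ab(2) ab(1), of 2] ab(4)] ab
    by (simp_all add: power2_eq_square power3_eq_cube)
  have "a * b^2 * nA \<le> (8 * m^3) * (2 * C0^2 * sqrt m)"
    by (rule mult_mono[OF cube(1)]) (use n nk m in auto)
  moreover have "a^2 * b * nB \<le> (8 * m^3) * (2 * C0^2 * sqrt m)"
    by (rule mult_mono[OF cube(2)]) (use n nk m in auto)
  moreover have "(8 * m^3) * (2 * C0^2 * sqrt m) = 16 * (C0^2 * P)" using P(1) by (simp add: algebra_simps)
  moreover have "C0^2 * P \<le> C0^12 * P" using C0p[of 2] P_def by (simp add: mult_right_mono)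
  ultimately have side: "a * b^2 * nA + a^2 * b * nB \<le> 32 * (C0^12 * P)" by linarith
  define Q where "Q = m^4 / (max k 1)^2"
  have "0 \<le> Q" unfolding Q_def by simp
  then have "C0^12 * m^3 \<le> C0^12 * P" "C0^8 * Q \<le> C0^12 * Q"
    using P(2) C0p[of 8] C0 by (simp_all add: mult_right_mono mult_left_mono)
  then have main: "nA * nB * ((nA + C0 * a / k)^2 * (nB + C0 * b / k)^2) \<le> 64 * (C0^12 * P) + 128 * (C0^12 * Q)"
    using trapezoid_main_term_le[OF C0 k(1,3) k2 ab n] unfolding Q_def by linarith
  have "1 * m^3 \<le> C0^12 * P" using P(2) C0p[of 0] m by (intro mult_mono) auto
  moreover have "0 \<le> C0^12 * Q" "0 \<le> C0^12 * P" unfolding P_def Q_def by simp_all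
  moreover have "128 * C0^12 * (P + Q) = 128 * (C0^12 * P) + 128 * (C0^12 * Q)" by (simp add: algebra_simps)
  ultimately show ?thesis using T cube side main unfolding P_def Q_def by linarith
qed

section \<open>Regular and irregular sets\<close>

context field
begin

lemma k_regular_line_cover:
  assumes reg: "k_regular R C0 k A" and ne: "A \<noteq> {}" and C0: "1 \<le> C0"
  obtains L P where "line_cover R L P A" "real (card L) \<le> C0 * k" "1 \<le> C0 * k" "0 < k"
    "\<And>l. l \<in> L \<Longrightarrow> real (card (P l)) \<le> C0 * real (card A) / k" "k \<le> C0 * sqrt (real (card A))"
proof -
  obtain L P where L: "finite L" "\<forall>l\<in>L. is_line R l" "real (card L) \<le> C0 * k"
      "A = (\<Union>l\<in>L. P l)" "\<forall>l\<in>L. P l \<subseteq> l \<and> real (card (P l)) \<le> C0 * real (card A) / k"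
    and k: "k \<le> C0 * sqrt (real (card A))"
    using reg unfolding k_regular_def by blast
  have "L \<noteq> {}" using ne L(4) by auto
  then have "1 \<le> real (card L)" using L(1) by (simp add: Suc_le_eq card_gt_0_iff)
  then have Ck: "1 \<le> C0 * k" using L(3) by linarith
  have "0 < k"
  proof (rule ccontr)
    assume "\<not> 0 < k"
    then have "C0 * k \<le> 0" using C0 by (simp add: mult_nonneg_nonpos)
    then show False using Ck by simp
  qed
  moreover have "line_cover R L P A" using L unfolding line_cover_def by auto
  ultimately show ?thesis using that L k Ck by blast
qed

lemma rect_count_le_regular:
  assumes fin: "finite (carrier R)" and no_sqrt: "\<not> (\<exists>x\<in>carrier R. x \<otimes> x = \<ominus> \<one>)"
    and C0: "1 \<le> C0" and reg: "k_regular R C0 k A" and ne: "A \<noteq> {}"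
  shows "real (rect_count R A) \<le> 4 * C0^4 * max k 1 * real (card A)^2"
proof -
  obtain L P where cover: "line_cover R L P A" and L: "real (card L) \<le> C0 * k" "1 \<le> C0 * k" "0 < k"
    and P: "\<And>l. l \<in> L \<Longrightarrow> real (card (P l)) \<le> C0 * real (card A) / k"
    and k: "k \<le> C0 * sqrt (real (card A))"
    using k_regular_line_cover[OF reg ne C0] by blast
  have "finite A" using line_cover_subset[OF cover] fin finite_subset by blast
  then have "real (rect_count R A) \<le> real (card (corners R A))"
    using card_rectangles_le_corners[OF no_sqrt] line_cover_subset[OF cover] by simp
  also have "\<dots> \<le> real (card A)^2 + real (card A)^2 * real (card L)
      + real (card L) * real (card A) * (real (card L) + C0 * real (card A) / k)"
    using card_corners_le[OF fin no_sqrt cover P] C0 \<open>0 < k\<close> by simp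
  finally have rect: "real (rect_count R A) \<le> real (card A)^2 + real (card A)^2 * real (card L)
      + real (card L) * real (card A) * (real (card L) + C0 * real (card A) / k)" .
  show ?thesis by (rule corner_bound_arith[OF C0 \<open>0 < k\<close> k _ _ L(1) _ _ rect]) auto
qed

lemma trap_count_le_regular:
  assumes fin: "finite (carrier R)" and C0: "1 \<le> C0" and m: "1 \<le> m"
    and A: "k_regular R C0 k A" "m / 2 \<le> real (card A)" "real (card A) \<le> 2 * m"
    and B: "k_regular R C0 k B" "m / 2 \<le> real (card B)" "real (card B) \<le> 2 * m"
  shows "real (trap_count R A B) \<le> 128 * C0^12 * (m powr (7/2) + m^4 / (max k 1)^2)"
proof -
  have ne: "A \<noteq> {}" "B \<noteq> {}" using A(2) B(2) m by auto
  obtain LA PA where coverA: "line_cover R LA PA A" and LA: "real (card LA) \<le> C0 * k" "1 \<le> C0 * k" "0 < k"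
    and PA: "\<And>l. l \<in> LA \<Longrightarrow> real (card (PA l)) \<le> C0 * real (card A) / k"
    and k: "k \<le> C0 * sqrt (real (card A))"
    using k_regular_line_cover[OF A(1) ne(1) C0] by blast
  obtain LB PB where coverB: "line_cover R LB PB B" and LB: "real (card LB) \<le> C0 * k"
    and PB: "\<And>l. l \<in> LB \<Longrightarrow> real (card (PB l)) \<le> C0 * real (card B) / k"
    using k_regular_line_cover[OF B(1) ne(2) C0] by blast
  have trap: "real (trap_count R A B) \<le> real (card A) * real (card B)^2
      + real (card A) * real (card B)^2 * real (card LA) + real (card A)^2 * real (card B) * real (card LB)
      + real (card LA) * real (card LB)
        * ((real (card LA) + C0 * real (card A) / k)^2 * (real (card LB) + C0 * real (card B) / k)^2)"
    using trap_count_le_covers[OF fin coverA PA _ coverB PB] C0 \<open>0 < k\<close> by simp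
  show ?thesis by (rule trapezoid_bound_arith[OF C0 m _ A(3) _ B(3) \<open>0 < k\<close> k LA(2) _ LA(1) _ LB trap]) auto
qed

lemma trap_count_le_irregular_powr:
  assumes fin: "finite (carrier R)" and m: "1 \<le> m"
    and AB: "A \<subseteq> carrier R \<times> carrier R" "B \<subseteq> carrier R \<times> carrier R" "irregular R B"
    and card: "real (card A) \<le> 2 * m" "real (card B) \<le> 2 * m"
  shows "real (trap_count R A B) \<le> 24 * m powr (7/2)"
proof -
  let ?a = "real (card A)" and ?b = "real (card B)"
  have m0: "0 \<le> m" using m by simp
  have cube: "?a * ?b^2 \<le> 8 * m^3" "?a^2 * ?b \<le> 8 * m^3"
    using mult_mono[OF card(1) power_mono[OF card(2), of 2]] mult_mono[OF power_mono[OF card(1), of 2] card(2)] m0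
    by (simp_all add: power2_eq_square power3_eq_cube)
  have "sqrt ?b \<le> 2 * sqrt m" using card m real_sqrt_le_mono[of ?b "4 * m"] by (simp add: real_sqrt_mult)
  then have "?a^2 * ?b * sqrt ?b \<le> (8 * m^3) * (2 * sqrt m)" by (rule mult_mono[OF cube(2)]) (use m in auto)
  then have "?a^2 * ?b * sqrt ?b \<le> 16 * m powr (7/2)" using powr_seven_halves[of m] m by simp
  then show ?thesis using trap_count_le_irregular[OF fin AB] cube(1) cube_le_powr_seven_halves[OF m] by linarith
qed

lemma sqrt_rect_counts_le_regular:
  assumes fin: "finite (carrier R)" and no_sqrt: "\<not> (\<exists>x\<in>carrier R. x \<otimes> x = \<ominus> \<one>)"
    and C0: "1 \<le> C0" and m: "1 \<le> m"
    and A: "k_regular R C0 k A" "m / 2 \<le> real (card A)" "real (card A) \<le> 2 * m"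
    and B: "k_regular R C0 k B" "m / 2 \<le> real (card B)" "real (card B) \<le> 2 * m"
  shows "sqrt (real (rect_count R A) * real (rect_count R B)) \<le> 16 * C0^4 * m^2 * max k 1"
proof -
  let ?K = "max k 1"
  have "A \<noteq> {}" "B \<noteq> {}" using A(2) B(2) m by auto
  then have "real (rect_count R A) * real (rect_count R B)
      \<le> (4 * C0^4 * ?K * real (card A)^2) * (4 * C0^4 * ?K * real (card B)^2)"
    using rect_count_le_regular[OF fin no_sqrt C0 A(1)] rect_count_le_regular[OF fin no_sqrt C0 B(1)]
    by (intro mult_mono) auto
  also have "\<dots> = (4 * C0^4 * ?K * real (card A) * real (card B))^2" by (simp add: power2_eq_square ac_simps)
  finally have sq: "real (rect_count R A) * real (rect_count R B) \<le> (4 * C0^4 * ?K * real (card A) * real (card B))^2" .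
  have "sqrt (real (rect_count R A) * real (rect_count R B)) \<le> 4 * C0^4 * ?K * real (card A) * real (card B)"
    by (rule real_le_lsqrt[OF _ sq]) (use C0 in simp)
  also have "\<dots> \<le> 4 * C0^4 * ?K * (2 * m) * (2 * m)" using A(3) B(3) C0 by (intro mult_mono) auto
  finally show ?thesis by (simp add: power2_eq_square ac_simps)
qed

lemma min_rect_trap_le:
  assumes fin: "finite (carrier R)" and no_sqrt: "\<not> (\<exists>x\<in>carrier R. x \<otimes> x = \<ominus> \<one>)"
    and C0: "1 \<le> C0" and m: "1 \<le> m" and AB: "A \<subseteq> carrier R \<times> carrier R" "B \<subseteq> carrier R \<times> carrier R"
    and A: "m / 2 \<le> real (card A)" "real (card A) \<le> 2 * m"
    and B: "m / 2 \<le> real (card B)" "real (card B) \<le> 2 * m"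
    and H: "(\<exists>k. k_regular R C0 k A \<and> k_regular R C0 k B) \<or> (irregular R A \<and> irregular R B)"
  shows "min (real (card (carrier R)) * sqrt (real (rect_count R A) * real (rect_count R B)))
      (real (trap_count R A B))
    \<le> 128 * C0^12 * (m powr (8/3) * real (card (carrier R)) powr (2/3) + m powr (7/2))"
proof (cases "irregular R A \<and> irregular R B")
  case True
  then have "real (trap_count R A B) \<le> 24 * m powr (7/2)"
    using trap_count_le_irregular_powr[OF fin m AB] A B by blast
  moreover have "m powr (7/2) \<le> C0^12 * m powr (7/2)"
    using mult_right_mono[of 1 "C0^12" "m powr (7/2)"] C0 by (simp add: one_le_power)
  moreover have "0 \<le> m powr (7/2)" "0 \<le> C0^12 * (m powr (8/3) * real (card (carrier R)) powr (2/3))"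
    using C0 by simp_all
  moreover have "128 * C0^12 * (m powr (8/3) * real (card (carrier R)) powr (2/3) + m powr (7/2))
      = 128 * (C0^12 * (m powr (8/3) * real (card (carrier R)) powr (2/3))) + 128 * (C0^12 * m powr (7/2))"
    by (simp add: algebra_simps)
  ultimately show ?thesis by linarith
next
  case False
  then obtain k where A_reg: "k_regular R C0 k A" and B_reg: "k_regular R C0 k B" using H by blast
  show ?thesis
  proof (rule min_le_balanced)
    show "0 < real (card (carrier R))" using fin zero_closed by (auto simp: card_gt_0_iff)
    have "C0^4 \<le> C0^12" using C0 by (intro power_increasing) auto
    moreover have "0 \<le> C0^12" using C0 by simp
    ultimately have "16 * C0^4 \<le> 128 * C0^12" by linarith
    then have "16 * C0^4 * m^2 * max k 1 \<le> 128 * C0^12 * m^2 * max k 1" by (intro mult_right_mono) auto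
    then show "sqrt (real (rect_count R A) * real (rect_count R B)) \<le> 128 * C0^12 * m^2 * max k 1"
      using sqrt_rect_counts_le_regular[OF fin no_sqrt C0 m A_reg A B_reg B] by linarith
  qed (use C0 m trap_count_le_regular[OF fin C0 m A_reg A B_reg B] in auto)
qed

end

theorem proposition4p4:
  fixes C0 :: real
  assumes "C0 \<ge> 1"
  shows "\<exists>C>0. \<forall>(R :: ('a, 'b) ring_scheme) (m :: real) (A :: ('a \<times> 'a) set) B.
     field R \<longrightarrow> finite (carrier R)
     \<longrightarrow> \<one>\<^bsub>R\<^esub> \<oplus>\<^bsub>R\<^esub> \<one>\<^bsub>R\<^esub> \<noteq> \<zero>\<^bsub>R\<^esub>
     \<longrightarrow> \<not> (\<exists>x\<in>carrier R. x \<otimes>\<^bsub>R\<^esub> x = \<ominus>\<^bsub>R\<^esub> \<one>\<^bsub>R\<^esub>)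
     \<longrightarrow> m \<ge> 1
     \<longrightarrow> A \<subseteq> carrier R \<times> carrier R \<longrightarrow> B \<subseteq> carrier R \<times> carrier R
     \<longrightarrow> m / 2 \<le> real (card A) \<longrightarrow> real (card A) \<le> 2 * m
     \<longrightarrow> m / 2 \<le> real (card B) \<longrightarrow> real (card B) \<le> 2 * m
     \<longrightarrow> ((\<exists>k. k_regular R C0 k A \<and> k_regular R C0 k B) \<or> (irregular R A \<and> irregular R B))
     \<longrightarrow> min (real (card (carrier R)) * sqrt (real (rect_count R A) * real (rect_count R B)))
             (real (trap_count R A B))
         \<le> C * (m powr (8/3) * real (card (carrier R)) powr (2/3) + m powr (7/2))"
proof (intro exI[of _ "128 * C0^12"] conjI allI impI)
  show "0 < 128 * C0^12" using assms by simp
qed (rule field.min_rect_trap_le, assumption+, rule assms, assumption+)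

end
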